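(* Let $\delta\ge0$ and let $Z_\delta(t)$ be the total discounted IBNR claims defined in the context. For every $n\in\mathbb{N}$ and $t>0$, $$\mathbb{E}[Z_\delta^n(t)]=\sum_{i=0}^{n-1}\mu_{n-i}\binom{n}{i}e^{-(n-i)\delta t}\int_0^t e^{-i\delta x}\,\mathcal{T}_{(n-i)\delta}w(t-x)\,\mathbb{E}[Z_\delta^i(t-x)]\,\mathrm{d}m(x),$$ with starting value $\mathbb{E}[Z_\delta^0(t)]=1$.
   Context: Let $\{\tau_i\}_{i\ge1}$ be i.i.d. positive interarrival times with cdf $F$ and pdf $f=F'$; set $T_0:=0$, $T_n:=\sum_{i=1}^n\tau_i$, and $N(t):=\max\{i\ge 0: T_i\le t\}$, with renewal function $m(t):=\mathbb{E}[N(t)]=\sum_{i\ge1}F^{*(i)}(t)$. Let $\{X_i\}_{i\ge1}$ be i.i.d. claim amounts with generic copy $X$, $\mu_k:=\mathbb{E}[X^k]$, $\mu_0:=1$. Let $\{L_i\}_{i\ge1}$ be i.i.d. reporting delays with cdf $W$, survival function $\overline W=1-W$ and pdf $w=W'$. The sequences $\{\tau_i\}$, $\{X_i\}$, $\{L_i\}$ are mutually independent. For $\delta\ge0$, $Z_\delta(t):=\sum_{i=1}^{\infty}e^{-\delta(T_i+L_i)}\mathbf{1}_{\{T_i\le t<T_i+L_i\}}X_i$. The Dickson–Hipp operator is $\mathcal{T}_u g(v):=\int_v^\infty e^{-u(y-v)}g(y)\,\mathrm{d}y$ for $u,v\ge0$. *)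

theory Defs
  imports "HOL-Probability.Probability"
begin

text \<open>Indexing convention: the paper's interarrival times, claims and delays
  tau_1, tau_2, ... are represented by tau 0, tau 1, ... (shift by one).\<close>

definition arrival :: "(nat \<Rightarrow> 'a \<Rightarrow> real) \<Rightarrow> nat \<Rightarrow> 'a \<Rightarrow> real" where
  "arrival \<tau> n \<omega> = (\<Sum>i<n. \<tau> i \<omega>)"

text \<open>N(t) = max{i \<ge> 0. T_i \<le> t}; since T is strictly increasing with T_0 = 0 this
  is the number of indices i \<ge> 1 with T_i \<le> t.\<close>
definition renewal_count :: "(nat \<Rightarrow> 'a \<Rightarrow> real) \<Rightarrow> real \<Rightarrow> 'a \<Rightarrow> nat" where
  "renewal_count \<tau> t \<omega> = card {i. 1 \<le> i \<and> arrival \<tau> i \<omega> \<le> t}"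

definition renewal_fun :: "'a measure \<Rightarrow> (nat \<Rightarrow> 'a \<Rightarrow> real) \<Rightarrow> real \<Rightarrow> real" where
  "renewal_fun M \<tau> t = (\<integral>\<omega>. real (renewal_count \<tau> t \<omega>) \<partial>M)"

text \<open>Discounted IBNR claims Z_delta(t); summand i corresponds to the paper's index i+1.\<close>
definition Zdisc :: "real \<Rightarrow> (nat \<Rightarrow> 'a \<Rightarrow> real) \<Rightarrow> (nat \<Rightarrow> 'a \<Rightarrow> real) \<Rightarrow>
    (nat \<Rightarrow> 'a \<Rightarrow> real) \<Rightarrow> real \<Rightarrow> 'a \<Rightarrow> real" where
  "Zdisc \<delta> \<tau> X L t \<omega> =
     (\<Sum>i. exp (- \<delta> * (arrival \<tau> (Suc i) \<omega> + L i \<omega>)) *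
           (if arrival \<tau> (Suc i) \<omega> \<le> t \<and> t < arrival \<tau> (Suc i) \<omega> + L i \<omega> then 1 else 0) *
           X i \<omega>)"

definition DH :: "real \<Rightarrow> (real \<Rightarrow> real) \<Rightarrow> real \<Rightarrow> real" where
  "DH u g v = (\<integral>y\<in>{v..}. exp (- u * (y - v)) * g y \<partial>lborel)"

end

theory Submission
  imports Defs "HOL-Real_Asymp.Real_Asymp"
begin

(* Let a_j be the discounted contribution of the j-th claim to Z = Z_delta(t) and R_j
   that of all later claims. Telescoping Z^n over j gives
     Z^n = sum_j sum_{i<n} (n choose i) a_j^(n-i) R_j^i.
   By the renewal property, R_j is exp(-delta T) Z_delta(t - T) evaluated on a shifted copy
   of the process, where T = T_(j+1), and this copy is independent of (T, X_(j+1), L_(j+1)).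
   Hence the expectation of each summand factorises into mu_(n-i) times a function of T
   and E[Z_delta^i(t - T)]. Integrating out the delay L_(j+1) produces the Dickson-Hipp
   transform of w, and summing the laws of T_1, T_2, ... produces the renewal measure dm.
   The interchanges of sums and expectations are justified by dominated convergence:
   Z^n and all partial sums are bounded by a polynomial in N(t) and the claims, and N(t)
   has moments of every order because P(T_k <= s) <= e^s E[exp(-tau)]^k with
   E[exp(-tau)] < 1. *)

lemma sums_of_vanishing_from:
  fixes a :: "nat \<Rightarrow> real"
  assumes "\<And>j. K \<le> j \<Longrightarrow> a j = 0"
  shows "a sums (\<Sum>j<K. a j)"
  using assms by (intro sums_finite) auto

lemma suminf_tail_eq_sum:
  fixes a :: "nat \<Rightarrow> real"
  assumes fin: "\<And>j. K \<le> j \<Longrightarrow> a j = 0"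
  shows "(\<Sum>k. a (k + Suc j)) = (\<Sum>k\<in>{Suc j..<K}. a k)"
proof (cases "j < K")
  case True
  have "(\<lambda>k. a (k + Suc j)) sums (\<Sum>k<K - Suc j. a (k + Suc j))"
    using fin by (intro sums_of_vanishing_from) auto
  moreover have "(\<Sum>k<K - Suc j. a (k + Suc j)) = (\<Sum>k\<in>{Suc j..<K}. a k)"
  proof -
    have "(\<Sum>k<K - Suc j. a (k + Suc j)) = (\<Sum>k\<in>{0..<K - Suc j}. a (k + Suc j))"
      by (simp add: atLeast0LessThan)
    also have "\<dots> = (\<Sum>k\<in>{0 + Suc j..<K - Suc j + Suc j}. a k)"
      by (rule sum.shift_bounds_nat_ivl[symmetric])
    finally show ?thesis using True by simp
  qed
  ultimately show ?thesis by (simp add: sums_iff)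
next
  case False
  then show ?thesis using fin by simp
qed

lemma power_add_minus_power:
  fixes a b :: real
  assumes "1 \<le> n"
  shows "(a + b) ^ n - b ^ n = (\<Sum>i<n. real (n choose i) * a ^ (n - i) * b ^ i)"
proof -
  have "(a + b) ^ n = (\<Sum>i\<le>n. real (n choose i) * b ^ i * a ^ (n - i))"
    by (subst add.commute) (rule binomial_ring)
  also have "\<dots> = (\<Sum>i<n. real (n choose i) * b ^ i * a ^ (n - i)) + b ^ n"
    by (simp add: lessThan_Suc_atMost[symmetric])
  finally show ?thesis by (simp add: algebra_simps)
qed

lemma power_sum_telescope:
  fixes a :: "nat \<Rightarrow> real"
  assumes n: "1 \<le> n"
  shows "(\<Sum>j<K. a j) ^ n =
    (\<Sum>j<K. \<Sum>i<n. real (n choose i) * a j ^ (n - i) * (\<Sum>k\<in>{Suc j..<K}. a k) ^ i)"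
proof -
  define R where "R j = (\<Sum>k\<in>{j..<K}. a k)" for j
  have R_Suc: "R j = a j + R (Suc j)" if "j < K" for j
    unfolding R_def using that by (simp add: sum.atLeast_Suc_lessThan)
  have "(\<Sum>j<K. R j ^ n - R (Suc j) ^ n) = R 0 ^ n - R K ^ n"
    by (rule sum_lessThan_telescope')
  then have "(\<Sum>j<K. a j) ^ n = (\<Sum>j<K. R j ^ n - R (Suc j) ^ n)"
    using n by (simp add: R_def atLeast0LessThan)
  also have "\<dots> = (\<Sum>j<K. \<Sum>i<n. real (n choose i) * a j ^ (n - i) * R (Suc j) ^ i)"
    by (intro sum.cong refl) (simp add: R_Suc power_add_minus_power[OF n])
  finally show ?thesis by (simp add: R_def)
qed

lemma power_suminf_telescope_sums:
  fixes a :: "nat \<Rightarrow> real"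
  assumes fin: "\<And>j. K \<le> j \<Longrightarrow> a j = 0" and n: "1 \<le> n"
  shows "(\<lambda>j. \<Sum>i<n. real (n choose i) * a j ^ (n - i) * (\<Sum>k. a (k + Suc j)) ^ i)
           sums ((\<Sum>j. a j) ^ n)"
proof -
  have "(\<lambda>j. \<Sum>i<n. real (n choose i) * a j ^ (n - i) * (\<Sum>k. a (k + Suc j)) ^ i)
     sums (\<Sum>j<K. \<Sum>i<n. real (n choose i) * a j ^ (n - i) * (\<Sum>k. a (k + Suc j)) ^ i)"
    using fin n by (intro sums_of_vanishing_from) (auto intro!: sum.neutral)
  also have "(\<Sum>j<K. \<Sum>i<n. real (n choose i) * a j ^ (n - i) * (\<Sum>k. a (k + Suc j)) ^ i)
    = (\<Sum>j<K. a j) ^ n"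
    by (simp only: suminf_tail_eq_sum[of K a, OF fin] power_sum_telescope[OF n])
  also have "(\<Sum>j<K. a j) = (\<Sum>j. a j)"
    using sums_of_vanishing_from[of K a] fin by (simp add: sums_iff)
  finally show ?thesis .
qed

lemma sum_choose_lessThan_le: "(\<Sum>i<n. real (n choose i)) \<le> 2 ^ n"
proof -
  have "(\<Sum>i<n. real (n choose i)) \<le> (\<Sum>i\<le>n. real (n choose i))"
    by (intro sum_mono2) auto
  also have "\<dots> = 2 ^ n"
    using choose_row_sum[of n] by (metis of_nat_numeral of_nat_power of_nat_sum)
  finally show ?thesis .
qed

lemma abs_power_le_one_plus_abs_power:
  fixes x :: real assumes "p \<le> n" shows "\<bar>x\<bar> ^ p \<le> 1 + \<bar>x\<bar> ^ n"
proof (cases "\<bar>x\<bar> \<le> 1")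
  case True
  then have "\<bar>x\<bar> ^ p \<le> 1" by (simp add: power_le_one)
  then show ?thesis using zero_le_power[of "\<bar>x\<bar>" n] by linarith
next
  case False
  then have "\<bar>x\<bar> ^ p \<le> \<bar>x\<bar> ^ n" using assms by (intro power_increasing) auto
  then show ?thesis by simp
qed

lemma one_plus_power_le_sum:
  "(1 + real K) ^ q \<le> 1 + (\<Sum>k<K. (real k + 2) ^ q)"
proof (cases K)
  case (Suc K')
  have "(1 + real K) ^ q = (real K' + 2) ^ q" using Suc by (simp add: add.commute)
  also have "\<dots> \<le> (\<Sum>k<K. (real k + 2) ^ q)"
    using Suc by (intro member_le_sum) auto
  finally show ?thesis by simp
qed simp

lemma summable_power_mult_geometric:
  fixes p :: real assumes p: "0 \<le> p" "p < 1"
  shows "summable (\<lambda>k. (real k + 2) ^ q * p ^ Suc k)"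
proof (cases "p = 0")
  case False
  define r where "r = sqrt p"
  have r: "0 < r" "r < 1" using p False by (auto simp: r_def)
  have pr: "p = r * r" using p by (simp add: r_def)
  have "((\<lambda>k. (real k + 2) ^ q * r ^ k) \<longlongrightarrow> 0) at_top"
    using r by real_asymp
  then have ev: "eventually (\<lambda>k. (real k + 2) ^ q * r ^ k < 1) at_top"
    by (rule order_tendstoD) simp
  show ?thesis
  proof (rule summable_comparison_test_ev)
    show "summable (\<lambda>k. p * r ^ k)" using r by (intro summable_mult summable_geometric) auto
    show "\<forall>\<^sub>F k in sequentially. norm ((real k + 2) ^ q * p ^ Suc k) \<le> p * r ^ k"
      using ev
    proof eventually_elim
      case (elim k)
      have "norm ((real k + 2) ^ q * p ^ Suc k) = p * (((real k + 2) ^ q * r ^ k) * r ^ k)"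
        using p by (simp add: pr power_mult_distrib abs_mult mult_ac)
      also have "\<dots> \<le> p * (1 * r ^ k)"
        using elim r p by (intro mult_left_mono mult_right_mono) auto
      finally show ?case by simp
    qed
  qed
qed simp

lemma finite_down_closed_eq_lessThan:
  fixes S :: "nat set"
  assumes "finite S" "\<And>j k. k \<in> S \<Longrightarrow> j \<le> k \<Longrightarrow> j \<in> S"
  shows "S = {..<card S}"
proof -
  obtain K where "K \<notin> S" using assms(1) ex_new_if_finite infinite_UNIV_nat by blast
  define L where "L = (LEAST k. k \<notin> S)"
  have "L \<notin> S" unfolding L_def using \<open>K \<notin> S\<close> by (rule LeastI)
  moreover have "k < L \<Longrightarrow> k \<in> S" for k unfolding L_def using not_less_Least by blast
  ultimately have "S = {..<L}" using assms(2) by (auto simp: not_less[symmetric])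
  then show ?thesis by simp
qed

lemma suminf_indicator_count_space:
  "(\<Sum>k. indicator A k :: ennreal) = emeasure (count_space (UNIV::nat set)) A"
  by (simp add: nn_integral_count_space_nat[symmetric] nn_integral_indicator)

lemma real_card_eq_enn2real_suminf_indicator:
  fixes A :: "nat set"
  shows "real (card A) = enn2real (\<Sum>k. indicator A k :: ennreal)"
  unfolding suminf_indicator_count_space by (cases "finite A") (auto simp: emeasure_count_space)

lemma distr_borel_eq_distr_lborel: "distr M borel g = distr M lborel g"
  by (rule distr_cong) auto

lemma integral_eq_if_distr_eq:
  fixes g :: "'b \<Rightarrow> real"
  assumes "distr M N U = distr M N W"
    and [measurable]: "U \<in> measurable M N" "W \<in> measurable M N" "g \<in> borel_measurable N"
  shows "(\<integral>\<omega>. g (U \<omega>) \<partial>M) = (\<integral>\<omega>. g (W \<omega>) \<partial>M)"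
  using integral_distr[of U M N g] integral_distr[of W M N g] assms(1) by simp

lemma nn_integral_eq_if_distr_eq:
  fixes g :: "'b \<Rightarrow> ennreal"
  assumes "distr M N U = distr M N W"
    and [measurable]: "U \<in> measurable M N" "W \<in> measurable M N" "g \<in> borel_measurable N"
  shows "(\<integral>\<^sup>+\<omega>. g (U \<omega>) \<partial>M) = (\<integral>\<^sup>+\<omega>. g (W \<omega>) \<partial>M)"
  using nn_integral_distr[of U M N g] nn_integral_distr[of W M N g] assms(1) by simp

lemma integrable_iff_distr_eq:
  fixes g :: "'b \<Rightarrow> real"
  assumes "distr M N U = distr M N W"
    and [measurable]: "U \<in> measurable M N" "W \<in> measurable M N" "g \<in> borel_measurable N"
  shows "integrable M (\<lambda>\<omega>. g (U \<omega>)) \<longleftrightarrow> integrable M (\<lambda>\<omega>. g (W \<omega>))"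
  using integrable_distr_eq[of U M N g] integrable_distr_eq[of W M N g] assms(1) by simp

lemma (in prob_space) indep_vars_reindex:
  fixes V :: "'i \<Rightarrow> 'a \<Rightarrow> real" and h :: "'j \<Rightarrow> 'i"
  assumes ind: "indep_vars (\<lambda>_. borel) V UNIV" and h: "inj_on h J" "J \<noteq> {}"
  shows "indep_vars (\<lambda>_. borel) (\<lambda>j. V (h j)) J"
proof -
  have rv[measurable]: "V i \<in> borel_measurable M" for i
    using ind by (auto simp: indep_vars_def)
  let ?P = "\<lambda>i. distr M borel (V i)"
  have D: "distr M (PiM UNIV (\<lambda>_. borel)) (\<lambda>x. \<lambda>i\<in>UNIV. V i x) = PiM UNIV ?P"
    using indep_vars_iff_distr_eq_PiM[where I=UNIV and X=V and M'="\<lambda>_. borel"] ind rv by auto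
  have mV: "(\<lambda>x. \<lambda>i\<in>UNIV. V i x) \<in> measurable M (PiM UNIV (\<lambda>_. borel))" by measurable
  have mR: "(\<lambda>\<omega>. \<lambda>j\<in>J. \<omega> (h j)) \<in>
      measurable (PiM UNIV (\<lambda>_. borel)) (PiM J (\<lambda>_. borel :: real measure))"
    by (rule measurable_restrict) auto
  have "distr M (PiM J (\<lambda>_. borel)) (\<lambda>x. \<lambda>j\<in>J. V (h j) x) =
        distr (distr M (PiM UNIV (\<lambda>_. borel)) (\<lambda>x. \<lambda>i\<in>UNIV. V i x))
          (PiM J (\<lambda>_. borel)) (\<lambda>\<omega>. \<lambda>j\<in>J. \<omega> (h j))"
    by (subst distr_distr[OF mR mV]) (simp add: comp_def)
  also have "\<dots> = distr (PiM UNIV ?P) (PiM J (\<lambda>j. ?P (h j))) (\<lambda>\<omega>. \<lambda>j\<in>J. \<omega> (h j))"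
    unfolding D by (intro distr_cong refl sets_PiM_cong) auto
  also have "\<dots> = PiM J (\<lambda>j. ?P (h j))"
    by (rule distr_PiM_reindex) (auto intro!: prob_space_distr h)
  finally show ?thesis
    using indep_vars_iff_distr_eq_PiM'[where I=J and X="\<lambda>j. V (h j)" and M'="\<lambda>_. borel"] h
    by auto
qed

lemma (in prob_space) indep_var_integral_iterated:
  fixes h :: "'b \<times> 'b \<Rightarrow> real"
  assumes ind: "indep_var S1 U S2 W" and h[measurable]: "h \<in> borel_measurable (S1 \<Otimes>\<^sub>M S2)"
    and int: "integrable M (\<lambda>\<omega>. h (U \<omega>, W \<omega>))"
  shows "(\<integral>\<omega>. h (U \<omega>, W \<omega>) \<partial>M) = (\<integral>\<omega>. (\<integral>\<omega>'. h (U \<omega>, W \<omega>') \<partial>M) \<partial>M)"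
proof -
  have U[measurable]: "U \<in> measurable M S1" and W[measurable]: "W \<in> measurable M S2"
    using indep_var_rv1[OF ind] indep_var_rv2[OF ind] by auto
  interpret PU: prob_space "distr M S1 U" by (rule prob_space_distr) simp
  interpret PW: prob_space "distr M S2 W" by (rule prob_space_distr) simp
  interpret PUW: pair_sigma_finite "distr M S1 U" "distr M S2 W" ..
  have J: "distr M S1 U \<Otimes>\<^sub>M distr M S2 W = distr M (S1 \<Otimes>\<^sub>M S2) (\<lambda>x. (U x, W x))"
    using ind indep_var_distribution_eq by blast
  have intJ: "integrable (distr M S1 U \<Otimes>\<^sub>M distr M S2 W) h"
    unfolding J by (subst integrable_distr_eq) (auto simp: int)
  have "(\<lambda>u. \<integral>w. h (u, w) \<partial>distr M S2 W) \<in> borel_measurable (distr M S1 U)"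
    by (intro PW.borel_measurable_lebesgue_integral) (simp add: J)
  then have inner[measurable]: "(\<lambda>u. \<integral>w. h (u, w) \<partial>distr M S2 W) \<in> borel_measurable S1"
    by simp
  have "(\<integral>\<omega>. h (U \<omega>, W \<omega>) \<partial>M) = integral\<^sup>L (distr M (S1 \<Otimes>\<^sub>M S2) (\<lambda>x. (U x, W x))) h"
    by (subst integral_distr) auto
  also have "\<dots> = (\<integral>u. (\<integral>w. h (u, w) \<partial>distr M S2 W) \<partial>distr M S1 U)"
    unfolding J[symmetric] by (rule PUW.integral_fst'[OF intJ, symmetric])
  also have "\<dots> = (\<integral>\<omega>. (\<integral>w. h (U \<omega>, w) \<partial>distr M S2 W) \<partial>M)"
    by (rule integral_distr) simp_all
  also have "\<dots> = (\<integral>\<omega>. (\<integral>\<omega>'. h (U \<omega>, W \<omega>') \<partial>M) \<partial>M)"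
  proof (rule Bochner_Integration.integral_cong)
    fix \<omega> assume "\<omega> \<in> space M"
    then have "U \<omega> \<in> space S1" using U by (auto simp: measurable_def)
    then show "(\<integral>w. h (U \<omega>, w) \<partial>distr M S2 W) = (\<integral>\<omega>'. h (U \<omega>, W \<omega>') \<partial>M)"
      by (intro integral_distr) auto
  qed simp
  finally show ?thesis .
qed

lemma (in prob_space) indep_var_nn_integral_mult:
  fixes A B :: "'a \<Rightarrow> ennreal"
  assumes ind: "indep_var borel A borel B"
  shows "(\<integral>\<^sup>+\<omega>. A \<omega> * B \<omega> \<partial>M) = (\<integral>\<^sup>+\<omega>. A \<omega> \<partial>M) * (\<integral>\<^sup>+\<omega>. B \<omega> \<partial>M)"
proof -
  have borel: "(\<lambda>_::bool. borel) = case_bool borel borel" by (rule ext) (simp split: bool.split)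
  have "indep_vars (\<lambda>_. borel) (case_bool A B) UNIV"
    using ind unfolding indep_var_def borel .
  from indep_vars_nn_integral[OF _ this] show ?thesis
    by (simp add: UNIV_bool mult.commute)
qed

lemma (in prob_space) nn_integral_one_plus_abs_power_finite:
  fixes Y :: "'a \<Rightarrow> real"
  assumes "integrable M (\<lambda>\<omega>. \<bar>Y \<omega>\<bar> ^ n)" "Y \<in> borel_measurable M"
  shows "(\<integral>\<^sup>+\<omega>. ennreal ((1 + \<bar>Y \<omega>\<bar>) ^ n) \<partial>M) < \<infinity>"
proof -
  have "(1 + \<bar>Y \<omega>\<bar>) ^ n \<le> 2 ^ n * (1 + \<bar>Y \<omega>\<bar> ^ n)" for \<omega>
  proof -
    have "(1 + \<bar>Y \<omega>\<bar>) ^ n \<le> (2 * max 1 \<bar>Y \<omega>\<bar>) ^ n" by (intro power_mono) auto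
    also have "\<dots> = 2 ^ n * max 1 \<bar>Y \<omega>\<bar> ^ n" by (simp add: power_mult_distrib)
    also have "max 1 \<bar>Y \<omega>\<bar> ^ n \<le> 1 + \<bar>Y \<omega>\<bar> ^ n"
      by (cases "1 \<le> \<bar>Y \<omega>\<bar>") (auto simp: max_def intro: power_le_one)
    finally show ?thesis by simp
  qed
  then have "(\<integral>\<^sup>+\<omega>. ennreal ((1 + \<bar>Y \<omega>\<bar>) ^ n) \<partial>M) \<le>
      (\<integral>\<^sup>+\<omega>. ennreal (norm (2 ^ n * (1 + \<bar>Y \<omega>\<bar> ^ n))) \<partial>M)"
    by (intro nn_integral_mono ennreal_leI) simp
  also have "\<dots> < \<infinity>"
    using assms by (intro integrable_iff_bounded[THEN iffD1, THEN conjunct2]) auto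
  finally show ?thesis .
qed

lemma cdf_measure_right_continuous:
  fixes \<nu> :: "real measure"
  assumes sets: "sets \<nu> = sets borel" and fin: "\<And>s. emeasure \<nu> {..s} < \<infinity>"
  shows "continuous (at_right a) (\<lambda>s. measure \<nu> {..s})"
proof -
  define \<nu>' where "\<nu>' = density \<nu> (indicator {..a+1})"
  have sets': "sets \<nu>' = sets borel" by (simp add: \<nu>'_def sets)
  have emeasure': "emeasure \<nu>' A = emeasure \<nu> ({..a+1} \<inter> A)" if "A \<in> sets borel" for A
    unfolding \<nu>'_def using that sets by (intro emeasure_restricted) auto
  have "space \<nu>' = UNIV" using sets_eq_imp_space_eq[OF sets'] by simp
  then have "finite_measure \<nu>'"
    using emeasure'[of UNIV] fin[of "a+1"] by (intro finite_measureI) simp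
  then interpret \<nu>': finite_borel_measure \<nu>'
    using sets' by (simp add: finite_borel_measure_def finite_borel_measure_axioms_def)
  have cdf_eq: "cdf \<nu>' x = measure \<nu> {..x}" if "x \<le> a + 1" for x
    using emeasure'[of "{..x}"] that by (simp add: cdf_def measure_def Int_absorb1)
  have "(cdf \<nu>' \<longlongrightarrow> cdf \<nu>' a) (at_right a)"
    using \<nu>'.cdf_is_right_cont by (simp add: continuous_within)
  moreover have ev: "eventually (\<lambda>x. cdf \<nu>' x = measure \<nu> {..x}) (at_right a)"
    by (rule eventually_at_rightI[where b="a + 1"]) (auto intro!: cdf_eq)
  ultimately show ?thesis
    using cdf_eq[of a] by (simp add: continuous_within tendsto_cong[OF ev])
qed

lemma emeasure_atMost_Int_greaterThan_cdf:
  fixes \<nu> :: "real measure"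
  assumes sets: "sets \<nu> = sets borel" and fin: "\<And>s. emeasure \<nu> {..s} < \<infinity>"
  shows "emeasure \<nu> ({..t} \<inter> {x<..}) =
    (if x < t then ennreal (measure \<nu> {..t} - measure \<nu> {..x}) else 0)"
proof (cases "x < t")
  case True
  have fin': "emeasure \<nu> {..s} = ennreal (measure \<nu> {..s})" for s
    using fin[of s] by (intro emeasure_eq_ennreal_measure) simp
  have "{..t} \<inter> {x<..} = {..t} - {..x}" by auto
  then have "emeasure \<nu> ({..t} \<inter> {x<..}) = emeasure \<nu> {..t} - emeasure \<nu> {..x}"
    using True fin[of x] sets by (simp add: emeasure_Diff)
  then show ?thesis using True by (simp add: fin' ennreal_minus)
next
  case False
  then have "{..t} \<inter> {x<..} = {}" by auto
  then show ?thesis using False by simp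
qed

lemma interval_measure_cdf_restrict:
  fixes \<nu> :: "real measure"
  assumes sets: "sets \<nu> = sets borel" and fin: "\<And>s. emeasure \<nu> {..s} < \<infinity>"
  shows "density (interval_measure (\<lambda>s. measure \<nu> {..s})) (indicator {..t}) =
    density \<nu> (indicator {..t})"
proof (rule measure_eqI_lessThan)
  let ?F = "\<lambda>s. measure \<nu> {..s}"
  have mono: "?F x \<le> ?F y" if "x \<le> y" for x y
    using emeasure_mono[of "{..x}" "{..y}" \<nu>] that sets fin
    by (simp add: emeasure_eq_ennreal_measure less_top)
  have IM_Ioc: "emeasure (interval_measure ?F) ({..t} \<inter> {x<..}) =
      (if x < t then ennreal (?F t - ?F x) else 0)" for x
  proof (cases "x < t")
    case True
    then have "{..t} \<inter> {x<..} = {x<..t}" by auto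
    then show ?thesis
      using True emeasure_interval_measure_Ioc[of x t ?F] mono
        cdf_measure_right_continuous[OF sets fin] by simp
  next
    case False
    then have "{..t} \<inter> {x<..} = {}" by auto
    then show ?thesis using False by simp
  qed
  show "sets (density (interval_measure ?F) (indicator {..t})) = sets borel"
    "sets (density \<nu> (indicator {..t})) = sets borel"
    by (simp_all add: sets)
  fix x :: real
  show "emeasure (density (interval_measure ?F) (indicator {..t})) {x<..} < \<infinity>"
    by (subst emeasure_restricted) (auto simp: IM_Ioc)
  show "emeasure (density (interval_measure ?F) (indicator {..t})) {x<..} =
        emeasure (density \<nu> (indicator {..t})) {x<..}"
    using sets
    by (subst (1 2) emeasure_restricted) (auto simp: IM_Ioc emeasure_atMost_Int_greaterThan_cdf[OF sets fin])
qed

lemma integral_interval_measure_cdf: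
  fixes \<nu> :: "real measure" and G :: "real \<Rightarrow> real"
  assumes sets: "sets \<nu> = sets borel" and fin: "\<And>s. emeasure \<nu> {..s} < \<infinity>"
    and [measurable]: "G \<in> borel_measurable borel" and supp: "\<And>x. t < x \<Longrightarrow> G x = 0"
  shows "(\<integral>x. G x \<partial>interval_measure (\<lambda>s. measure \<nu> {..s})) = (\<integral>x. G x \<partial>\<nu>)"
proof -
  let ?IM = "interval_measure (\<lambda>s. measure \<nu> {..s})"
  have G: "G x = indicator {..t} x * G x" for x
    using supp[of x] by (auto simp: indicator_def)
  have ind: "(\<lambda>x. ennreal (indicator {..t} x)) = indicator {..t}"
    by (auto simp: indicator_def)
  have "(\<integral>x. G x \<partial>?IM) = integral\<^sup>L (density ?IM (\<lambda>x. ennreal (indicator {..t} x))) G"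
    by (subst integral_real_density) (auto simp flip: G)
  also have "\<dots> = integral\<^sup>L (density \<nu> (\<lambda>x. ennreal (indicator {..t} x))) G"
    unfolding ind interval_measure_cdf_restrict[OF sets fin] ..
  also have "\<dots> = (\<integral>x. G x \<partial>\<nu>)"
    using sets by (subst integral_real_density) (auto simp flip: G)
  finally show ?thesis .
qed

(* A sample path is a real function on coord: Inl k, Inr (Inl k) and Inr (Inr k) carry the
   interarrival time, the claim amount and the reporting delay of claim k + 1. *)

type_synonym coord = "nat + (nat + nat)"

definition gap :: "(coord \<Rightarrow> real) \<Rightarrow> nat \<Rightarrow> real" where "gap y k = y (Inl k)"
definition claim :: "(coord \<Rightarrow> real) \<Rightarrow> nat \<Rightarrow> real" where "claim y k = y (Inr (Inl k))"
definition delay :: "(coord \<Rightarrow> real) \<Rightarrow> nat \<Rightarrow> real" where "delay y k = y (Inr (Inr k))"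

definition arr :: "(coord \<Rightarrow> real) \<Rightarrow> nat \<Rightarrow> real" where "arr y k = (\<Sum>i<k. gap y i)"

definition ibnr_term :: "real \<Rightarrow> real \<Rightarrow> (coord \<Rightarrow> real) \<Rightarrow> nat \<Rightarrow> real" where
  "ibnr_term d s y j = exp (- d * (arr y (Suc j) + delay y j)) *
     (if arr y (Suc j) \<le> s \<and> s < arr y (Suc j) + delay y j then 1 else 0) * claim y j"

definition ibnr_path :: "real \<Rightarrow> real \<Rightarrow> (coord \<Rightarrow> real) \<Rightarrow> real" where
  "ibnr_path d s y = (\<Sum>j. ibnr_term d s y j)"

definition shift_coord :: "nat \<Rightarrow> coord \<Rightarrow> coord" where
  "shift_coord m i = (case i of Inl k \<Rightarrow> Inl (k + m) | Inr (Inl k) \<Rightarrow> Inr (Inl (k + m))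
     | Inr (Inr k) \<Rightarrow> Inr (Inr (k + m)))"

definition shift_path :: "nat \<Rightarrow> (coord \<Rightarrow> real) \<Rightarrow> (coord \<Rightarrow> real)" where
  "shift_path m y = (\<lambda>i. y (shift_coord m i))"

definition arrivals :: "real \<Rightarrow> (coord \<Rightarrow> real) \<Rightarrow> nat" where
  "arrivals s y = card {k. arr y (Suc k) \<le> s}"

definition regular :: "real \<Rightarrow> (coord \<Rightarrow> real) \<Rightarrow> bool" where
  "regular s y \<longleftrightarrow> (\<forall>k. 0 < gap y k) \<and> finite {k. arr y (Suc k) \<le> s}"

lemma gap_shift_path[simp]: "gap (shift_path m y) k = gap y (k + m)"
  and claim_shift_path[simp]: "claim (shift_path m y) k = claim y (k + m)"
  and delay_shift_path[simp]: "delay (shift_path m y) k = delay y (k + m)"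
  by (simp_all add: gap_def claim_def delay_def shift_path_def shift_coord_def)

lemma arr_Suc: "arr y (Suc k) = arr y k + gap y k"
  by (simp add: arr_def)

lemma arr_0[simp]: "arr y 0 = 0"
  by (simp add: arr_def)

lemma arr_shift_path: "arr y (k + m) = arr y m + arr (shift_path m y) k"
  by (induction k) (auto simp: arr_Suc add.commute)

lemma arr_mono:
  assumes "\<forall>k. 0 < gap y k" "j \<le> k" shows "arr y j \<le> arr y k"
  using assms(2)
proof (induction k)
  case (Suc k)
  then show ?case using assms(1)[rule_format, of k]
    by (cases "j = Suc k") (auto simp: arr_Suc)
qed simp

lemma arr_Suc_pos:
  assumes "\<forall>k. 0 < gap y k" shows "0 < arr y (Suc k)"
  using arr_mono[OF assms, of 0 k] assms by (simp add: arr_Suc add_nonneg_pos)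

lemma regular_arrivals_eq_lessThan:
  assumes "regular s y" shows "{k. arr y (Suc k) \<le> s} = {..<arrivals s y}"
  unfolding arrivals_def
proof (rule finite_down_closed_eq_lessThan)
  show "finite {k. arr y (Suc k) \<le> s}" using assms by (simp add: regular_def)
  fix j k assume "k \<in> {k. arr y (Suc k) \<le> s}" "j \<le> k"
  then show "j \<in> {k. arr y (Suc k) \<le> s}"
    using arr_mono[of y "Suc j" "Suc k"] assms by (auto simp: regular_def)
qed

lemma regular_arrivals_iff: "regular s y \<Longrightarrow> arr y (Suc k) \<le> s \<longleftrightarrow> k < arrivals s y"
  using regular_arrivals_eq_lessThan[of s y] by (auto simp: set_eq_iff)

lemma ibnr_term_eq_0:
  assumes "regular t y" "s \<le> t" "arrivals t y \<le> j" shows "ibnr_term d s y j = 0"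
  using assms regular_arrivals_iff[OF assms(1), of j] by (auto simp: ibnr_term_def)

lemma ibnr_path_eq_sum:
  assumes "regular t y" "s \<le> t" shows "ibnr_path d s y = (\<Sum>j<arrivals t y. ibnr_term d s y j)"
  unfolding ibnr_path_def
  using sums_of_vanishing_from[of "arrivals t y" "ibnr_term d s y"] ibnr_term_eq_0[OF assms]
  by (simp add: sums_iff)

lemma ibnr_term_shift:
  "ibnr_term d s y (k + m) = exp (- d * arr y m) * ibnr_term d (s - arr y m) (shift_path m y) k"
proof -
  have "arr y (Suc (k + m)) = arr y m + arr (shift_path m y) (Suc k)"
    using arr_shift_path[of y "Suc k" m] by simp
  then show ?thesis unfolding ibnr_term_def
    by (simp add: algebra_simps exp_add[symmetric])
qed

lemma ibnr_tail_eq_shift_path: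
  assumes "regular t y"
  shows "(\<Sum>k. ibnr_term d t y (k + m)) =
    exp (- d * arr y m) * ibnr_path d (t - arr y m) (shift_path m y)"
proof -
  let ?e = "exp (- d * arr y m)"
  have eq: "ibnr_term d (t - arr y m) (shift_path m y) k = ibnr_term d t y (k + m) / ?e" for k
    by (simp add: ibnr_term_shift)
  have "summable (\<lambda>k. ibnr_term d (t - arr y m) (shift_path m y) k)"
    unfolding eq using ibnr_term_eq_0[OF assms order.refl]
    by (intro sums_summable[OF sums_of_vanishing_from[of "arrivals t y"]]) auto
  then have "(\<Sum>k. ?e * ibnr_term d (t - arr y m) (shift_path m y) k) =
      ?e * ibnr_path d (t - arr y m) (shift_path m y)"
    unfolding ibnr_path_def by (rule suminf_mult)
  then show ?thesis by (simp add: ibnr_term_shift)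
qed

definition telescope_term :: "real \<Rightarrow> nat \<Rightarrow> nat \<Rightarrow> real \<Rightarrow> (coord \<Rightarrow> real) \<Rightarrow> nat \<Rightarrow> real"
  where "telescope_term d n i t y j =
    real (n choose i) * ibnr_term d t y j ^ (n - i) * (\<Sum>k. ibnr_term d t y (k + Suc j)) ^ i"

lemma telescope_term_sums:
  assumes "regular t y" "1 \<le> n"
  shows "(\<lambda>j. \<Sum>i<n. telescope_term d n i t y j) sums (ibnr_path d t y ^ n)"
  unfolding telescope_term_def ibnr_path_def using ibnr_term_eq_0[OF assms(1) order.refl] assms(2)
  by (intro power_suminf_telescope_sums[of "arrivals t y"]) auto

lemma telescope_term_eq_shift_path:
  assumes "regular t y"
  shows "telescope_term d n i t y j = real (n choose i) * ibnr_term d t y j ^ (n - i) *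
     (exp (- d * arr y (Suc j)) * ibnr_path d (t - arr y (Suc j)) (shift_path (Suc j) y)) ^ i"
  unfolding telescope_term_def ibnr_tail_eq_shift_path[OF assms] ..

definition max_claim :: "(coord \<Rightarrow> real) \<Rightarrow> nat \<Rightarrow> real" where
  "max_claim y K = Max (insert 0 ((\<lambda>j. \<bar>claim y j\<bar>) ` {..<K}))"

(* The counts are written as series rather than with card so that the bound is
   evidently measurable in the path; on regular paths they are finite sums. *)
definition dominant :: "nat \<Rightarrow> real \<Rightarrow> (coord \<Rightarrow> real) \<Rightarrow> real" where
  "dominant n t y = 2 ^ n * (1 + (\<Sum>k. if arr y (Suc k) \<le> t then 1 else 0)) ^ (n + 1) *
     (1 + (\<Sum>k. if arr y (Suc k) \<le> t then (1 + \<bar>claim y k\<bar>) ^ n else 0))"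

lemma max_claim_nonneg: "0 \<le> max_claim y K"
  unfolding max_claim_def by (rule Max_ge) auto

lemma abs_claim_le_max_claim: "j < K \<Longrightarrow> \<bar>claim y j\<bar> \<le> max_claim y K"
  unfolding max_claim_def by (rule Max_ge) auto

lemma power_max_claim_le: "(1 + max_claim y K) ^ n \<le> 1 + (\<Sum>j<K. (1 + \<bar>claim y j\<bar>) ^ n)"
proof -
  have "max_claim y K \<in> insert 0 ((\<lambda>j. \<bar>claim y j\<bar>) ` {..<K})"
    unfolding max_claim_def by (rule Max_in) auto
  then consider "max_claim y K = 0" | j where "j < K" "max_claim y K = \<bar>claim y j\<bar>"
    by auto
  then show ?thesis
  proof cases
    case 1
    have "0 \<le> (\<Sum>j<K. (1 + \<bar>claim y j\<bar>) ^ n)" by (intro sum_nonneg) auto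
    then show ?thesis using 1 by simp
  next
    case 2
    have "(1 + \<bar>claim y j\<bar>) ^ n \<le> (\<Sum>j<K. (1 + \<bar>claim y j\<bar>) ^ n)"
      using 2 by (intro member_le_sum) auto
    then show ?thesis using 2 by simp
  qed
qed

lemma dominant_regular:
  assumes "regular t y"
  shows "dominant n t y = 2 ^ n * (1 + real (arrivals t y)) ^ (n + 1) *
    (1 + (\<Sum>j<arrivals t y. (1 + \<bar>claim y j\<bar>) ^ n))"
proof -
  have "(\<Sum>k. if arr y (Suc k) \<le> t then 1 else 0) = real (arrivals t y)"
    using sums_of_vanishing_from[of "arrivals t y" "\<lambda>k. if arr y (Suc k) \<le> t then 1 else 0"]
    by (auto simp: sums_iff regular_arrivals_iff[OF assms])
  moreover have "(\<Sum>k. if arr y (Suc k) \<le> t then (1 + \<bar>claim y k\<bar>) ^ n else 0) =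
      (\<Sum>j<arrivals t y. (1 + \<bar>claim y j\<bar>) ^ n)"
    using sums_of_vanishing_from[of "arrivals t y"
        "\<lambda>k. if arr y (Suc k) \<le> t then (1 + \<bar>claim y k\<bar>) ^ n else 0"]
    by (auto simp: sums_iff regular_arrivals_iff[OF assms])
  ultimately show ?thesis by (simp add: dominant_def)
qed

lemma dominant_nonneg: "regular t y \<Longrightarrow> 0 \<le> dominant n t y"
  by (simp add: dominant_regular sum_nonneg)

lemma dominant_ge:
  assumes "regular t y"
  shows "(1 + real (arrivals t y)) ^ (n + 1) * (1 + max_claim y (arrivals t y)) ^ n * 2 ^ n
    \<le> dominant n t y"
proof -
  have "(1 + real (arrivals t y)) ^ (n + 1) * (1 + max_claim y (arrivals t y)) ^ n \<le>
        (1 + real (arrivals t y)) ^ (n + 1) * (1 + (\<Sum>j<arrivals t y. (1 + \<bar>claim y j\<bar>) ^ n))"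
    by (intro mult_left_mono power_max_claim_le) auto
  from mult_left_mono[OF this, of "2 ^ n"] show ?thesis
    by (simp add: dominant_regular[OF assms] mult_ac)
qed

lemma abs_ibnr_term_le:
  assumes "regular t y" "0 \<le> d" "s \<le> t"
  shows "\<bar>ibnr_term d s y j\<bar> \<le> (if j < arrivals t y then 1 + max_claim y (arrivals t y) else 0)"
proof (cases "arr y (Suc j) \<le> s \<and> s < arr y (Suc j) + delay y j")
  case True
  then have j: "j < arrivals t y" using regular_arrivals_iff[OF assms(1), of j] assms(3) by auto
  have "0 < arr y (Suc j)" using assms(1) arr_Suc_pos by (auto simp: regular_def)
  then have "0 \<le> d * (arr y (Suc j) + delay y j)"
    using True assms(2) by (intro mult_nonneg_nonneg) auto
  then have e: "exp (- d * (arr y (Suc j) + delay y j)) \<le> 1" by simp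
  have "\<bar>ibnr_term d s y j\<bar> = exp (- d * (arr y (Suc j) + delay y j)) * \<bar>claim y j\<bar>"
    using True by (simp add: ibnr_term_def abs_mult)
  also have "\<dots> \<le> 1 * \<bar>claim y j\<bar>" using e by (intro mult_right_mono) auto
  also have "\<dots> \<le> 1 + max_claim y (arrivals t y)" using abs_claim_le_max_claim[OF j, of y] by simp
  finally show ?thesis using j by simp
next
  case False
  then have "ibnr_term d s y j = 0" unfolding ibnr_term_def by (simp only: if_False)
  then show ?thesis using max_claim_nonneg[of y "arrivals t y"] by simp
qed

lemma abs_ibnr_path_le:
  assumes "regular t y" "0 \<le> d" "s \<le> t"
  shows "\<bar>ibnr_path d s y\<bar> \<le> real (arrivals t y) * (1 + max_claim y (arrivals t y))"
proof -
  have "\<bar>ibnr_path d s y\<bar> \<le> (\<Sum>j<arrivals t y. \<bar>ibnr_term d s y j\<bar>)"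
    unfolding ibnr_path_eq_sum[OF assms(1,3)] by (rule sum_abs)
  also have "\<dots> \<le> (\<Sum>j<arrivals t y. 1 + max_claim y (arrivals t y))"
    using abs_ibnr_term_le[OF assms] by (intro sum_mono) (metis lessThan_iff)
  finally show ?thesis by simp
qed

lemma abs_ibnr_tail_le:
  assumes g: "regular t y" and d: "0 \<le> d"
  shows "\<bar>\<Sum>k. ibnr_term d t y (k + Suc j)\<bar> \<le> real (arrivals t y) * (1 + max_claim y (arrivals t y))"
proof -
  let ?m = "1 + max_claim y (arrivals t y)"
  have "(\<Sum>k. ibnr_term d t y (k + Suc j)) = (\<Sum>k\<in>{Suc j..<arrivals t y}. ibnr_term d t y k)"
    by (rule suminf_tail_eq_sum) (rule ibnr_term_eq_0[OF g order.refl])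
  also have "\<bar>\<dots>\<bar> \<le> (\<Sum>k\<in>{Suc j..<arrivals t y}. \<bar>ibnr_term d t y k\<bar>)" by (rule sum_abs)
  also have "\<dots> \<le> (\<Sum>k\<in>{Suc j..<arrivals t y}. ?m)"
  proof (intro sum_mono)
    fix k assume "k \<in> {Suc j..<arrivals t y}"
    then show "\<bar>ibnr_term d t y k\<bar> \<le> ?m" using abs_ibnr_term_le[OF g d order.refl, of k] by simp
  qed
  also have "\<dots> \<le> (\<Sum>k<arrivals t y. ?m)"
    using max_claim_nonneg[of y "arrivals t y"] by (intro sum_mono2) auto
  finally show ?thesis by simp
qed

lemma abs_power_ibnr_path_le_dominant:
  assumes "regular t y" "0 \<le> d" "s \<le> t" "i \<le> n"
  shows "\<bar>ibnr_path d s y ^ i\<bar> \<le> dominant n t y"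
proof -
  let ?K = "real (arrivals t y)" and ?m = "1 + max_claim y (arrivals t y)"
  have m1: "1 \<le> ?m" using max_claim_nonneg[of y "arrivals t y"] by simp
  then have one_le: "1 \<le> (1 + ?K) * ?m" using mult_mono[OF _ m1, of 1 "1 + ?K"] by simp
  have "\<bar>ibnr_path d s y ^ i\<bar> \<le> (?K * ?m) ^ i"
    unfolding power_abs by (intro power_mono abs_ibnr_path_le[OF assms(1-3)]) auto
  also have "\<dots> \<le> ((1 + ?K) * ?m) ^ i" using m1 by (intro power_mono mult_right_mono) auto
  also have "\<dots> \<le> ((1 + ?K) * ?m) ^ n" using one_le assms(4) by (intro power_increasing)
  also have "\<dots> \<le> (1 + ?K) ^ (n + 1) * ?m ^ n * 2 ^ n"
  proof -
    have "(1 + ?K) ^ n \<le> (1 + ?K) ^ (n + 1)" by (intro power_increasing) auto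
    then have "(1 + ?K) ^ n * ?m ^ n \<le> (1 + ?K) ^ (n + 1) * ?m ^ n * 1"
      using m1 by (simp add: mult_right_mono)
    also have "\<dots> \<le> (1 + ?K) ^ (n + 1) * ?m ^ n * 2 ^ n"
      using m1 by (intro mult_left_mono) auto
    finally show ?thesis by (simp add: power_mult_distrib)
  qed
  also have "\<dots> \<le> dominant n t y" by (rule dominant_ge[OF assms(1)])
  finally show ?thesis .
qed

lemma abs_telescope_term_le:
  assumes g: "regular t y" and d: "0 \<le> d" and i: "i < n"
  shows "\<bar>telescope_term d n i t y j\<bar> \<le> real (n choose i) *
    (if j < arrivals t y then (1 + real (arrivals t y)) ^ n * (1 + max_claim y (arrivals t y)) ^ n
     else 0)"
proof (cases "j < arrivals t y")
  case False
  then have "ibnr_term d t y j = 0" using ibnr_term_eq_0[OF g order.refl] by simp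
  then show ?thesis using False i by (simp add: telescope_term_def)
next
  case True
  let ?K = "real (arrivals t y)" and ?m = "1 + max_claim y (arrivals t y)"
  have m1: "1 \<le> ?m" using max_claim_nonneg[of y "arrivals t y"] by simp
  have a: "\<bar>ibnr_term d t y j\<bar> ^ (n - i) \<le> ?m ^ (n - i)"
    using abs_ibnr_term_le[OF g d order.refl, of j] True by (intro power_mono) auto
  have b: "\<bar>\<Sum>k. ibnr_term d t y (k + Suc j)\<bar> ^ i \<le> ((1 + ?K) * ?m) ^ i"
    using abs_ibnr_tail_le[OF g d, of j] m1
    by (intro power_mono) (auto intro: order.trans mult_right_mono)
  have "\<bar>telescope_term d n i t y j\<bar> = real (n choose i) *
      (\<bar>ibnr_term d t y j\<bar> ^ (n - i) * \<bar>\<Sum>k. ibnr_term d t y (k + Suc j)\<bar> ^ i)"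
    by (simp add: telescope_term_def abs_mult power_abs)
  also have "\<dots> \<le> real (n choose i) * (?m ^ (n - i) * ((1 + ?K) * ?m) ^ i)"
    using a b m1 by (intro mult_left_mono mult_mono) (auto intro!: zero_le_power)
  also have "?m ^ (n - i) * ((1 + ?K) * ?m) ^ i = (1 + ?K) ^ i * ?m ^ n"
    using i by (simp add: power_mult_distrib power_add[symmetric] mult_ac)
  also have "(1 + ?K) ^ i \<le> (1 + ?K) ^ n" using i by (intro power_increasing) auto
  then have "real (n choose i) * ((1 + ?K) ^ i * ?m ^ n) \<le> real (n choose i) * ((1 + ?K) ^ n * ?m ^ n)"
    using m1 by (intro mult_left_mono mult_right_mono) auto
  finally show ?thesis using True by simp
qed

lemma abs_telescope_term_le_dominant:
  assumes g: "regular t y" and d: "0 \<le> d" and i: "i < n"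
  shows "\<bar>telescope_term d n i t y j\<bar> \<le> dominant n t y"
proof -
  let ?K = "real (arrivals t y)" and ?m = "1 + max_claim y (arrivals t y)"
  have m1: "1 \<le> ?m" using max_claim_nonneg[of y "arrivals t y"] by simp
  have "\<bar>telescope_term d n i t y j\<bar> \<le> real (n choose i) * ((1 + ?K) ^ n * ?m ^ n)"
    using abs_telescope_term_le[OF assms, of j] m1 by (auto split: if_splits)
  also have "\<dots> \<le> 2 ^ n * ((1 + ?K) ^ (n + 1) * ?m ^ n)"
  proof (rule mult_mono)
    have "real (n choose i) \<le> (\<Sum>i<n. real (n choose i))"
      using i by (intro member_le_sum) auto
    then show "real (n choose i) \<le> 2 ^ n"
      using sum_choose_lessThan_le[of n] by linarith
    show "(1 + ?K) ^ n * ?m ^ n \<le> (1 + ?K) ^ (n + 1) * ?m ^ n"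
      using m1 by (intro mult_right_mono power_increasing) auto
  qed (use m1 in auto)
  also have "\<dots> \<le> dominant n t y" using dominant_ge[OF g, of n] by (simp add: mult_ac)
  finally show ?thesis .
qed

lemma abs_telescope_partial_sum_le_dominant:
  assumes g: "regular t y" and d: "0 \<le> d"
  shows "\<bar>\<Sum>j<N. \<Sum>i<n. telescope_term d n i t y j\<bar> \<le> dominant n t y"
proof -
  let ?K = "real (arrivals t y)" and ?m = "1 + max_claim y (arrivals t y)"
  let ?c = "\<lambda>j. 2 ^ n * (if j < arrivals t y then (1 + ?K) ^ n * ?m ^ n else 0)"
  have m1: "1 \<le> ?m" using max_claim_nonneg[of y "arrivals t y"] by simp
  have row: "\<bar>\<Sum>i<n. telescope_term d n i t y j\<bar> \<le> ?c j" for j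
  proof -
    have "\<bar>\<Sum>i<n. telescope_term d n i t y j\<bar> \<le> (\<Sum>i<n. \<bar>telescope_term d n i t y j\<bar>)"
      by (rule sum_abs)
    also have "\<dots> \<le> (\<Sum>i<n. real (n choose i)) * (?c j / 2 ^ n)"
      unfolding sum_distrib_right using abs_telescope_term_le[OF g d] by (intro sum_mono) auto
    also have "\<dots> \<le> 2 ^ n * (?c j / 2 ^ n)"
      using sum_choose_lessThan_le m1 by (intro mult_right_mono) auto
    finally show ?thesis by simp
  qed
  have "\<bar>\<Sum>j<N. \<Sum>i<n. telescope_term d n i t y j\<bar> \<le> (\<Sum>j<N. ?c j)"
    by (rule order.trans[OF sum_abs sum_mono[OF row]])
  also have "\<dots> = (\<Sum>j\<in>{..<N} \<inter> {..<arrivals t y}. ?c j)"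
    by (intro sum.mono_neutral_right) auto
  also have "\<dots> \<le> (\<Sum>j<arrivals t y. ?c j)" using m1 by (intro sum_mono2) auto
  also have "\<dots> \<le> (1 + ?K) * (2 ^ n * ((1 + ?K) ^ n * ?m ^ n))"
    using m1 by (simp add: mult_right_mono)
  also have "\<dots> \<le> dominant n t y" using dominant_ge[OF g, of n] by (simp add: mult_ac)
  finally show ?thesis .
qed

abbreviation path_space :: "(coord \<Rightarrow> real) measure" where
  "path_space \<equiv> PiM UNIV (\<lambda>_. borel)"

lemma measurable_gap[measurable]: "(\<lambda>y. gap y k) \<in> borel_measurable path_space"
  unfolding gap_def by measurable

lemma measurable_claim[measurable]: "(\<lambda>y. claim y k) \<in> borel_measurable path_space"
  unfolding claim_def by measurable

lemma measurable_delay[measurable]: "(\<lambda>y. delay y k) \<in> borel_measurable path_space"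
  unfolding delay_def by measurable

lemma measurable_arr[measurable]: "(\<lambda>y. arr y k) \<in> borel_measurable path_space"
  unfolding arr_def by measurable

lemma measurable_ibnr_term[measurable]:
  "(\<lambda>(s, y). ibnr_term d s y j) \<in> borel_measurable (borel \<Otimes>\<^sub>M path_space)"
  unfolding ibnr_term_def by measurable

lemma measurable_ibnr_path[measurable]:
  "(\<lambda>(s, y). ibnr_path d s y) \<in> borel_measurable (borel \<Otimes>\<^sub>M path_space)"
  unfolding ibnr_path_def by measurable

lemma measurable_shift_path[measurable]: "shift_path m \<in> measurable path_space path_space"
  unfolding shift_path_def by (rule measurable_PiM_single') (auto simp: space_PiM)

lemma measurable_telescope_term[measurable]:
  "(\<lambda>y. telescope_term d n i t y j) \<in> borel_measurable path_space"
  unfolding telescope_term_def ibnr_term_def by measurable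

lemma measurable_dominant[measurable]: "(\<lambda>y. dominant n t y) \<in> borel_measurable path_space"
  unfolding dominant_def by measurable

definition path_mask :: "coord set \<Rightarrow> (coord \<Rightarrow> real) \<Rightarrow> (coord \<Rightarrow> real)" where
  "path_mask A y = (\<lambda>i. if i \<in> A then y i else 0)"

lemma measurable_path_mask_PiM: "path_mask A \<in> measurable (PiM A (\<lambda>_. borel)) path_space"
  unfolding path_mask_def
proof (rule measurable_PiM_single')
  fix i :: coord
  show "(\<lambda>u. if i \<in> A then u i else 0) \<in> borel_measurable (PiM A (\<lambda>_. borel))"
    by (cases "i \<in> A") auto
qed (auto simp: space_PiM)

lemma measurable_path_mask[measurable]: "path_mask A \<in> measurable path_space path_space"
  unfolding path_mask_def by (rule measurable_PiM_single') (auto simp: space_PiM)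

lemma path_mask_restrict: "path_mask A (restrict y A) = path_mask A y"
  by (auto simp: path_mask_def)

lemma gap_path_mask: "gap (path_mask A y) k = (if Inl k \<in> A then gap y k else 0)"
  and claim_path_mask: "claim (path_mask A y) k = (if Inr (Inl k) \<in> A then claim y k else 0)"
  and delay_path_mask: "delay (path_mask A y) k = (if Inr (Inr k) \<in> A then delay y k else 0)"
  by (simp_all add: gap_def claim_def delay_def path_mask_def)

lemma arr_path_mask: "(\<And>k. k < m \<Longrightarrow> Inl k \<in> A) \<Longrightarrow> arr (path_mask A y) m = arr y m"
  unfolding arr_def by (intro sum.cong) (auto simp: gap_path_mask)

definition head_coords :: "nat \<Rightarrow> coord set" where
  "head_coords j = Inl ` {..j} \<union> {Inr (Inl j), Inr (Inr j)}"

definition tail_coords :: "nat \<Rightarrow> coord set" where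
  "tail_coords j = range (shift_coord (Suc j))"

lemma head_tail_coords_disjoint: "head_coords j \<inter> tail_coords j = {}"
  by (auto simp: head_coords_def tail_coords_def shift_coord_def split: sum.splits)

lemma arr_path_mask_head: "arr (path_mask (head_coords j) y) (Suc j) = arr y (Suc j)"
  by (rule arr_path_mask) (auto simp: head_coords_def)

lemma ibnr_term_path_mask_head: "ibnr_term d s (path_mask (head_coords j) y) j = ibnr_term d s y j"
proof -
  have "delay (path_mask (head_coords j) y) j = delay y j" "claim (path_mask (head_coords j) y) j = claim y j"
    by (simp_all add: delay_path_mask claim_path_mask head_coords_def)
  then show ?thesis by (simp add: ibnr_term_def arr_path_mask_head)
qed

lemma shift_path_mask_tail: "shift_path (Suc j) (path_mask (tail_coords j) y) = shift_path (Suc j) y"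
  by (auto simp: shift_path_def path_mask_def tail_coords_def)

lemma inj_shift_coord: "inj (shift_coord m)"
  unfolding inj_def shift_coord_def by (auto split: sum.splits)

definition arrival_count :: "real \<Rightarrow> (coord \<Rightarrow> real) \<Rightarrow> ennreal" where
  "arrival_count s y = (\<Sum>k. indicator {..s} (arr y (Suc k)))"

lemma measurable_arrival_count[measurable]: "arrival_count s \<in> borel_measurable path_space"
  unfolding arrival_count_def by measurable

lemma arrival_count_eq: "arrival_count s y = emeasure (count_space UNIV) {k. arr y (Suc k) \<le> s}"
  unfolding arrival_count_def suminf_indicator_count_space[symmetric]
  by (intro suminf_cong) (auto simp: indicator_def)

lemma arrival_count_regular: "regular s y \<Longrightarrow> arrival_count s y = of_nat (arrivals s y)"
  unfolding arrival_count_eq arrivals_def regular_def by (simp add: emeasure_count_space)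

lemma arrival_count_path_mask_gaps: "arrival_count s (path_mask (range Inl) y) = arrival_count s y"
  by (simp add: arrival_count_def arr_path_mask)

lemma power_arrival_count_le:
  assumes "regular t y"
  shows "(1 + arrival_count t y) ^ q \<le>
    1 + (\<Sum>k. ennreal ((real k + 2) ^ q) * indicator {..t} (arr y (Suc k)))"
proof -
  let ?K = "arrivals t y"
  have "(\<Sum>k. ennreal ((real k + 2) ^ q) * indicator {..t} (arr y (Suc k))) =
      (\<Sum>k<?K. ennreal ((real k + 2) ^ q))"
    by (subst suminf_finite[where N="{..<?K}"])
      (auto simp: regular_arrivals_iff[OF assms] indicator_def)
  moreover have "(1 + arrival_count t y) ^ q = ennreal ((1 + real ?K) ^ q)"
    by (simp add: arrival_count_regular[OF assms] ennreal_power[symmetric]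
        ennreal_of_nat_eq_real_of_nat)
  moreover have "ennreal ((1 + real ?K) ^ q) \<le> ennreal (1 + (\<Sum>k<?K. (real k + 2) ^ q))"
    by (rule ennreal_leI) (rule one_plus_power_le_sum)
  moreover have "ennreal (1 + (\<Sum>k<?K. (real k + 2) ^ q)) = 1 + (\<Sum>k<?K. ennreal ((real k + 2) ^ q))"
    by (subst ennreal_plus) (auto intro!: sum_nonneg)
  ultimately show ?thesis by simp
qed

definition claim_mass :: "nat \<Rightarrow> real \<Rightarrow> (coord \<Rightarrow> real) \<Rightarrow> ennreal" where
  "claim_mass n t y = (\<Sum>k. indicator {..t} (arr y (Suc k)) * ennreal ((1 + \<bar>claim y k\<bar>) ^ n))"

lemma measurable_claim_mass[measurable]: "claim_mass n t \<in> borel_measurable path_space"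
  unfolding claim_mass_def by measurable

lemma ennreal_dominant_eq:
  assumes "regular t y"
  shows "ennreal (dominant n t y) = ennreal (2 ^ n) *
    ((1 + arrival_count t y) ^ (n + 1) + (1 + arrival_count t y) ^ (n + 1) * claim_mass n t y)"
proof -
  let ?K = "arrivals t y"
  let ?S = "\<Sum>j<?K. (1 + \<bar>claim y j\<bar>) ^ n"
  have S_nonneg: "0 \<le> ?S" by (intro sum_nonneg) auto
  have "claim_mass n t y = (\<Sum>j<?K. ennreal ((1 + \<bar>claim y j\<bar>) ^ n))"
    unfolding claim_mass_def
    by (subst suminf_finite[where N="{..<?K}"])
      (auto simp: regular_arrivals_iff[OF assms] indicator_def)
  also have "\<dots> = ennreal ?S" by (rule sum_ennreal) auto
  finally have mass: "1 + claim_mass n t y = ennreal (1 + ?S)"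
    using S_nonneg by (simp add: ennreal_plus)
  have "ennreal (1 + real ?K) = 1 + arrival_count t y"
    by (simp add: arrival_count_regular[OF assms] ennreal_of_nat_eq_real_of_nat ennreal_plus)
  then have count: "ennreal ((1 + real ?K) ^ (n + 1)) = (1 + arrival_count t y) ^ (n + 1)"
    by (metis ennreal_power of_nat_0_le_iff add_nonneg_nonneg zero_le_one)
  have "ennreal (dominant n t y) =
      ennreal (2 ^ n) * ennreal ((1 + real ?K) ^ (n + 1)) * ennreal (1 + ?S)"
    using S_nonneg by (simp add: dominant_regular[OF assms] ennreal_mult)
  also have "\<dots> = ennreal (2 ^ n) * ((1 + arrival_count t y) ^ (n + 1) * (1 + claim_mass n t y))"
    unfolding count mass by (simp add: mult.assoc)
  finally show ?thesis by (simp add: distrib_left)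
qed

locale ibnr_model = prob_space M for M :: "'a measure" +
  fixes \<tau> X L :: "nat \<Rightarrow> 'a \<Rightarrow> real" and w :: "real \<Rightarrow> real" and \<delta> :: real
  assumes indep: "indep_vars (\<lambda>_. borel) (case_sum \<tau> (case_sum X L)) UNIV"
    and tau_pos: "\<And>i \<omega>. \<omega> \<in> space M \<Longrightarrow> \<tau> i \<omega> > 0"
    and tau_ident: "\<And>i. distr M borel (\<tau> i) = distr M borel (\<tau> 0)"
    and X_ident: "\<And>i. distr M borel (X i) = distr M borel (X 0)"
    and w_nonneg: "\<And>x. w x \<ge> 0" and w_meas[measurable]: "w \<in> borel_measurable borel"
    and L_dens: "\<And>i. distributed M lborel (L i) (\<lambda>x. ennreal (w x))"
    and delta: "\<delta> \<ge> 0"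
begin

definition path :: "'a \<Rightarrow> coord \<Rightarrow> real" where
  "path \<omega> = (\<lambda>i. case_sum \<tau> (case_sum X L) i \<omega>)"

definition T :: "nat \<Rightarrow> 'a \<Rightarrow> real" where "T k \<omega> = arrival \<tau> (Suc k) \<omega>"

lemma measurable_coords[measurable]: "case_sum \<tau> (case_sum X L) i \<in> borel_measurable M"
  using indep by (auto simp: indep_vars_def)

lemma measurable_tau[measurable]: "\<tau> i \<in> borel_measurable M"
  and measurable_X[measurable]: "X i \<in> borel_measurable M"
  and measurable_L[measurable]: "L i \<in> borel_measurable M"
  using measurable_coords[of "Inl i"] measurable_coords[of "Inr (Inl i)"]
    measurable_coords[of "Inr (Inr i)"] by simp_all

lemma measurable_path[measurable]: "path \<in> measurable M path_space"
  unfolding path_def by (rule measurable_PiM_single') (auto simp: space_PiM)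

lemma measurable_T[measurable]: "T k \<in> borel_measurable M"
  unfolding T_def arrival_def by measurable

lemma gap_path[simp]: "gap (path \<omega>) k = \<tau> k \<omega>"
  and claim_path[simp]: "claim (path \<omega>) k = X k \<omega>"
  and delay_path[simp]: "delay (path \<omega>) k = L k \<omega>"
  by (simp_all add: gap_def claim_def delay_def path_def)

lemma arr_path: "arr (path \<omega>) k = arrival \<tau> k \<omega>"
  by (simp add: arr_def arrival_def)

lemma arr_Suc_path: "arr (path \<omega>) (Suc k) = T k \<omega>"
  by (simp add: T_def arr_path)

lemma Zdisc_eq_ibnr_path: "Zdisc \<delta> \<tau> X L s \<omega> = ibnr_path \<delta> s (path \<omega>)"
  unfolding Zdisc_def ibnr_path_def ibnr_term_def arr_path by simp

lemma T_pos: "\<omega> \<in> space M \<Longrightarrow> 0 < T k \<omega>"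
  using arr_Suc_pos[of "path \<omega>" k] tau_pos by (simp add: arr_Suc_path)

lemma indep_path_masks:
  assumes "A \<inter> B = {}"
  shows "indep_var path_space (\<lambda>\<omega>. path_mask A (path \<omega>)) path_space (\<lambda>\<omega>. path_mask B (path \<omega>))"
proof -
  have "indep_var (PiM A (\<lambda>_. borel)) (\<lambda>\<omega>. restrict (path \<omega>) A)
                  (PiM B (\<lambda>_. borel)) (\<lambda>\<omega>. restrict (path \<omega>) B)"
    using indep_var_restrict[OF indep, of A B] assms by (simp add: path_def)
  then have "indep_var path_space (path_mask A \<circ> (\<lambda>\<omega>. restrict (path \<omega>) A))
      path_space (path_mask B \<circ> (\<lambda>\<omega>. restrict (path \<omega>) B))"
    by (rule indep_var_compose) (rule measurable_path_mask_PiM)+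
  then show ?thesis by (simp add: comp_def path_mask_restrict)
qed

lemma indep_path_masks_compose:
  fixes g1 g2 :: "(coord \<Rightarrow> real) \<Rightarrow> 'b::topological_space"
  assumes "A \<inter> B = {}" "g1 \<in> borel_measurable path_space" "g2 \<in> borel_measurable path_space"
  shows "indep_var borel (\<lambda>\<omega>. g1 (path_mask A (path \<omega>))) borel (\<lambda>\<omega>. g2 (path_mask B (path \<omega>)))"
  using indep_var_compose[OF indep_path_masks[OF assms(1)] assms(2,3)] by (simp add: comp_def)

lemma distr_shift_path: "distr M path_space (\<lambda>\<omega>. shift_path m (path \<omega>)) = distr M path_space path"
proof -
  let ?V = "case_sum \<tau> (case_sum X L)"
  have coord_ident: "distr M borel (?V (shift_coord m i)) = distr M borel (?V i)" for i
  proof -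
    have "distr M borel (L k) = distr M borel (L k')" for k k'
      using L_dens[of k] L_dens[of k'] by (simp add: distributed_def distr_borel_eq_distr_lborel)
    moreover have "distr M borel (\<tau> k) = distr M borel (\<tau> k')" for k k'
      using tau_ident[of k] tau_ident[of k'] by simp
    moreover have "distr M borel (X k) = distr M borel (X k')" for k k'
      using X_ident[of k] X_ident[of k'] by simp
    ultimately show ?thesis
      by (cases i rule: sum.exhaust; (rename_tac a, case_tac a)?)
         (auto simp: shift_coord_def split: sum.split)
  qed
  have ind: "indep_vars (\<lambda>_. borel) (\<lambda>i. ?V (shift_coord m i)) UNIV"
    using indep_vars_reindex[OF indep, of "shift_coord m" UNIV] inj_shift_coord by simp
  have "distr M path_space (\<lambda>\<omega>. shift_path m (path \<omega>)) =
      PiM UNIV (\<lambda>i. distr M borel (?V (shift_coord m i)))"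
    using indep_vars_iff_distr_eq_PiM[where I=UNIV and X="\<lambda>i. ?V (shift_coord m i)"] ind
    by (simp add: shift_path_def path_def restrict_def)
  also have "\<dots> = distr M path_space path"
    using indep_vars_iff_distr_eq_PiM[where I=UNIV and X="?V"] indep
    by (simp add: coord_ident path_def[abs_def] restrict_def)
  finally show ?thesis .
qed

lemma integral_shift_path:
  fixes g :: "(coord \<Rightarrow> real) \<Rightarrow> real"
  assumes [measurable]: "g \<in> borel_measurable path_space"
  shows "(\<integral>\<omega>. g (shift_path m (path \<omega>)) \<partial>M) = (\<integral>\<omega>. g (path \<omega>) \<partial>M)"
  by (rule integral_eq_if_distr_eq[OF distr_shift_path]) simp_all

definition gap_laplace :: real where "gap_laplace = (\<integral>\<omega>. exp (- \<tau> 0 \<omega>) \<partial>M)"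

lemma integrable_exp_neg_tau: "integrable M (\<lambda>\<omega>. exp (- \<tau> i \<omega>))"
  using tau_pos by (intro integrable_const_bound[where B=1]) (auto intro: less_imp_le)

lemma gap_laplace_nonneg: "0 \<le> gap_laplace"
  unfolding gap_laplace_def by (intro integral_nonneg_AE AE_I2) simp

lemma gap_laplace_less_1: "gap_laplace < 1"
proof -
  have "(\<integral>\<omega>. exp (- \<tau> 0 \<omega>) \<partial>M) < (\<integral>\<omega>. 1 \<partial>M)"
    using tau_pos integrable_exp_neg_tau
    by (intro integral_less_AE_space) (auto simp: emeasure_space_1)
  then show ?thesis by (simp add: gap_laplace_def prob_space)
qed

lemma integral_exp_neg_T: "(\<integral>\<omega>. exp (- T k \<omega>) \<partial>M) = gap_laplace ^ Suc k"
proof -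
  have "indep_vars (\<lambda>_. borel) \<tau> {..<Suc k}"
    using indep_vars_reindex[OF indep, of Inl "{..<Suc k}"] by fastforce
  then have ind: "indep_vars (\<lambda>_. borel) (\<lambda>i \<omega>. exp (- \<tau> i \<omega>)) {..<Suc k}"
    by (rule indep_vars_compose2) auto
  have "exp (- T k \<omega>) = (\<Prod>i<Suc k. exp (- \<tau> i \<omega>))" for \<omega>
    unfolding T_def arrival_def sum_negf[symmetric] by (rule exp_sum) simp
  then have "(\<integral>\<omega>. exp (- T k \<omega>) \<partial>M) = (\<integral>\<omega>. (\<Prod>i<Suc k. exp (- \<tau> i \<omega>)) \<partial>M)"
    by simp
  also have "\<dots> = (\<Prod>i<Suc k. \<integral>\<omega>. exp (- \<tau> i \<omega>) \<partial>M)"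
    by (rule indep_vars_lebesgue_integral[OF _ ind]) (auto intro: integrable_exp_neg_tau)
  also have "\<dots> = (\<Prod>i<Suc k. gap_laplace)"
    unfolding gap_laplace_def using tau_ident
    by (intro prod.cong refl integral_eq_if_distr_eq[where g="\<lambda>x. exp (- x)"]) auto
  finally show ?thesis by simp
qed

lemma prob_T_le: "prob {\<omega>\<in>space M. T k \<omega> \<le> s} \<le> exp s * gap_laplace ^ Suc k"
proof -
  have "prob {\<omega>\<in>space M. T k \<omega> \<le> s} = (\<integral>\<omega>. indicator {\<omega>\<in>space M. T k \<omega> \<le> s} \<omega> \<partial>M)"
    by simp
  also have "\<dots> \<le> (\<integral>\<omega>. exp s * exp (- T k \<omega>) \<partial>M)"
  proof (rule integral_mono)
    show "integrable M (\<lambda>\<omega>. exp s * exp (- T k \<omega>))"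
      using T_pos by (intro integrable_mult_right integrable_const_bound[where B=1])
        (auto intro: less_imp_le)
    fix \<omega>
    have "1 \<le> exp s * exp (- T k \<omega>)" if "T k \<omega> \<le> s"
      using that by (simp add: exp_minus field_simps)
    then show "indicator {\<omega>\<in>space M. T k \<omega> \<le> s} \<omega> \<le> exp s * exp (- T k \<omega>)"
      by (auto simp: indicator_def)
  qed (auto intro!: integrable_const_bound[where B=1])
  also have "\<dots> = exp s * gap_laplace ^ Suc k" by (simp add: integral_exp_neg_T)
  finally show ?thesis .
qed

definition renewal_measure :: "real measure" where
  "renewal_measure = distr (count_space UNIV \<Otimes>\<^sub>M M) borel (\<lambda>(k, \<omega>). T k \<omega>)"

lemma measurable_T_pair[measurable]:
  "(\<lambda>(k, \<omega>). T k \<omega>) \<in> borel_measurable (count_space UNIV \<Otimes>\<^sub>M M)"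
  by (rule measurable_pair_measure_countable1) auto

lemma sets_renewal_measure[simp, measurable_cong]: "sets renewal_measure = sets borel"
  by (simp add: renewal_measure_def)

lemma nn_integral_renewal_measure:
  assumes [measurable]: "g \<in> borel_measurable borel"
  shows "(\<integral>\<^sup>+x. g x \<partial>renewal_measure) = (\<Sum>k. \<integral>\<^sup>+\<omega>. g (T k \<omega>) \<partial>M)"
proof -
  have "(\<integral>\<^sup>+x. g x \<partial>renewal_measure) =
      (\<integral>\<^sup>+p. g (case p of (k, \<omega>) \<Rightarrow> T k \<omega>) \<partial>(count_space UNIV \<Otimes>\<^sub>M M))"
    unfolding renewal_measure_def by (rule nn_integral_distr) auto
  also have "\<dots> = (\<integral>\<^sup>+k. (\<integral>\<^sup>+\<omega>. g (T k \<omega>) \<partial>M) \<partial>count_space UNIV)"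
    by (subst sigma_finite_measure.nn_integral_fst[symmetric])
       (auto simp: split_beta' intro: sigma_finite_measure_axioms
             intro!: measurable_pair_measure_countable1)
  also have "\<dots> = (\<Sum>k. \<integral>\<^sup>+\<omega>. g (T k \<omega>) \<partial>M)" by (rule nn_integral_count_space_nat)
  finally show ?thesis .
qed

lemma emeasure_renewal_measure_atMost:
  "emeasure renewal_measure {..s} = (\<Sum>k. emeasure M {\<omega>\<in>space M. T k \<omega> \<le> s})"
proof -
  have "emeasure renewal_measure {..s} = (\<integral>\<^sup>+x. indicator {..s} x \<partial>renewal_measure)"
    by (rule nn_integral_indicator[symmetric]) simp
  also have "\<dots> = (\<Sum>k. \<integral>\<^sup>+\<omega>. indicator {..s} (T k \<omega>) \<partial>M)"
    by (rule nn_integral_renewal_measure) simp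
  also have "\<dots> = (\<Sum>k. \<integral>\<^sup>+\<omega>. indicator {\<omega>\<in>space M. T k \<omega> \<le> s} \<omega> \<partial>M)"
    by (intro suminf_cong nn_integral_cong) (auto simp: indicator_def)
  finally show ?thesis by simp
qed

lemma summable_geometric_gap_laplace: "summable (\<lambda>k. c * gap_laplace ^ Suc k)"
  using gap_laplace_nonneg gap_laplace_less_1
  by (intro summable_mult summable_ignore_initial_segment[where k=1, simplified]
        summable_geometric) auto

lemma emeasure_renewal_measure_atMost_finite: "emeasure renewal_measure {..s} < \<infinity>"
proof -
  have "emeasure renewal_measure {..s} \<le> (\<Sum>k. ennreal (exp s * gap_laplace ^ Suc k))"
    unfolding emeasure_renewal_measure_atMost using prob_T_le
    by (intro suminf_le summableI) (simp add: emeasure_eq_measure ennreal_leI)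
  also have "\<dots> = ennreal (\<Sum>k. exp s * gap_laplace ^ Suc k)"
    using gap_laplace_nonneg by (intro suminf_ennreal2 summable_geometric_gap_laplace) auto
  finally show ?thesis using ennreal_less_top[of "\<Sum>k. exp s * gap_laplace ^ Suc k"]
    by (simp add: le_less_trans)
qed

lemma AE_regular: "AE \<omega> in M. regular s (path \<omega>)"
proof -
  have "(\<integral>\<^sup>+\<omega>. arrival_count s (path \<omega>) \<partial>M) = (\<Sum>k. \<integral>\<^sup>+\<omega>. indicator {..s} (T k \<omega>) \<partial>M)"
    unfolding arrival_count_def by (subst nn_integral_suminf) (auto simp: arr_Suc_path)
  also have "\<dots> = emeasure renewal_measure {..s}"
    using nn_integral_renewal_measure[of "indicator {..s}"] by simp
  finally have "AE \<omega> in M. arrival_count s (path \<omega>) \<noteq> \<infinity>"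
    using emeasure_renewal_measure_atMost_finite[of s] by (intro nn_integral_PInf_AE) auto
  then show ?thesis using AE_space
  proof eventually_elim
    case (elim \<omega>)
    then have "finite {k. arr (path \<omega>) (Suc k) \<le> s}"
      by (cases "finite {k. arr (path \<omega>) (Suc k) \<le> s}")
        (auto simp: arrival_count_eq emeasure_count_space)
    then show ?case using tau_pos elim by (simp add: regular_def)
  qed
qed

lemma renewal_fun_eq_renewal_measure: "renewal_fun M \<tau> s = measure renewal_measure {..s}"
proof -
  have card_eq: "real (renewal_count \<tau> s \<omega>) = enn2real (arrival_count s (path \<omega>))" for \<omega>
  proof -
    have "{i. 1 \<le> i \<and> arrival \<tau> i \<omega> \<le> s} = Suc ` {k. T k \<omega> \<le> s}"
      by (auto simp: T_def image_iff intro: exI[of _ "i - 1" for i] elim!: Suc_le_D[THEN exE])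
    then have "renewal_count \<tau> s \<omega> = card {k. T k \<omega> \<le> s}"
      by (simp add: renewal_count_def card_image)
    then show ?thesis
      using real_card_eq_enn2real_suminf_indicator[of "{k. T k \<omega> \<le> s}"]
      by (simp add: arrival_count_eq arr_Suc_path suminf_indicator_count_space)
  qed
  have "renewal_fun M \<tau> s = enn2real (\<integral>\<^sup>+\<omega>. ennreal (enn2real (arrival_count s (path \<omega>))) \<partial>M)"
    unfolding renewal_fun_def card_eq by (rule integral_eq_nn_integral) auto
  also have "(\<integral>\<^sup>+\<omega>. ennreal (enn2real (arrival_count s (path \<omega>))) \<partial>M) =
      (\<integral>\<^sup>+\<omega>. arrival_count s (path \<omega>) \<partial>M)"
    using AE_regular[of s]
    by (intro nn_integral_cong_AE) (auto elim!: eventually_mono simp: arrival_count_regular ennreal_of_nat_eq_real_of_nat)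
  also have "\<dots> = emeasure renewal_measure {..s}"
    unfolding arrival_count_def
    using nn_integral_renewal_measure[of "indicator {..s}"]
    by (subst nn_integral_suminf) (auto simp: arr_Suc_path)
  finally show ?thesis by (simp add: measure_def)
qed

lemma integral_renewal_measure_sums:
  fixes G :: "real \<Rightarrow> real"
  assumes [measurable]: "G \<in> borel_measurable borel" and "integrable renewal_measure G"
  shows "(\<lambda>k. \<integral>\<omega>. G (T k \<omega>) \<partial>M) sums (\<integral>x. G x \<partial>renewal_measure)"
proof -
  interpret pair_sigma_finite "count_space (UNIV::nat set)" M
    unfolding pair_sigma_finite_def
    by (simp add: sigma_finite_measure_count_space_countable prob_space_imp_sigma_finite
        prob_space_axioms)
  have int: "integrable (count_space UNIV \<Otimes>\<^sub>M M) (\<lambda>(k, \<omega>). G (T k \<omega>))"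
    using assms(2) unfolding renewal_measure_def
    by (subst (asm) integrable_distr_eq) (auto simp: split_beta')
  have "(\<integral>x. G x \<partial>renewal_measure) = (\<integral>p. (\<lambda>(k, \<omega>). G (T k \<omega>)) p \<partial>(count_space UNIV \<Otimes>\<^sub>M M))"
    unfolding renewal_measure_def by (subst integral_distr) (auto simp: split_beta')
  also have "\<dots> = (\<integral>k. (\<integral>\<omega>. G (T k \<omega>) \<partial>M) \<partial>count_space UNIV)"
    using integral_fst'[OF int] by simp
  finally show ?thesis
    using sums_integral_count_space_nat[OF integrable_fst'[OF int]] by simp
qed

lemma renewal_fun_sums:
  fixes G :: "real \<Rightarrow> real"
  assumes [measurable]: "G \<in> borel_measurable borel" and bound: "\<And>x. \<bar>G x\<bar> \<le> c"
    and supp: "\<And>x. t < x \<Longrightarrow> G x = 0"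
  shows "(\<lambda>k. \<integral>\<omega>. G (T k \<omega>) \<partial>M) sums (\<integral>x. G x \<partial>interval_measure (renewal_fun M \<tau>))"
proof -
  have int: "integrable renewal_measure G"
  proof (rule Bochner_Integration.integrable_bound)
    show "integrable renewal_measure (\<lambda>x. c * indicator {..t} x)"
      using emeasure_renewal_measure_atMost_finite[of t]
      by (intro integrable_mult_right integrable_real_indicator) auto
    show "AE x in renewal_measure. norm (G x) \<le> norm (c * indicator {..t} x)"
    proof (rule AE_I2)
      fix x
      have "0 \<le> c" using bound[of x] by simp
      then show "norm (G x) \<le> norm (c * indicator {..t} x)"
        using bound[of x] supp[of x] by (auto simp: indicator_def)
    qed
  qed simp
  have F: "renewal_fun M \<tau> = (\<lambda>s. measure renewal_measure {..s})"
    by (rule ext) (rule renewal_fun_eq_renewal_measure)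
  have "(\<integral>x. G x \<partial>interval_measure (renewal_fun M \<tau>)) = (\<integral>x. G x \<partial>renewal_measure)"
    unfolding F using sets_renewal_measure emeasure_renewal_measure_atMost_finite
    by (rule integral_interval_measure_cdf) (use supp in auto)
  with integral_renewal_measure_sums[OF _ int] show ?thesis by simp
qed

lemma nn_integral_power_arrival_count_finite:
  "(\<integral>\<^sup>+\<omega>. (1 + arrival_count t (path \<omega>)) ^ q \<partial>M) < \<infinity>"
proof -
  let ?c = "\<lambda>k. (real k + 2) ^ q"
  have "(\<integral>\<^sup>+\<omega>. (1 + arrival_count t (path \<omega>)) ^ q \<partial>M) \<le>
      (\<integral>\<^sup>+\<omega>. 1 + (\<Sum>k. ennreal (?c k) * indicator {..t} (T k \<omega>)) \<partial>M)"
    using AE_regular[of t]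
    by (intro nn_integral_mono_AE) (auto elim!: eventually_mono
        dest: power_arrival_count_le[where q=q] simp: arr_Suc_path)
  also have "\<dots> = 1 + (\<Sum>k. ennreal (?c k) * emeasure M {\<omega>\<in>space M. T k \<omega> \<le> t})"
  proof -
    have "(\<integral>\<^sup>+\<omega>. ennreal (?c k) * indicator {..t} (T k \<omega>) \<partial>M) =
        (\<integral>\<^sup>+\<omega>. ennreal (?c k) * indicator {\<omega>\<in>space M. T k \<omega> \<le> t} \<omega> \<partial>M)" for k
      by (intro nn_integral_cong) (auto simp: indicator_def)
    also have "\<dots> k = ennreal (?c k) * emeasure M {\<omega>\<in>space M. T k \<omega> \<le> t}" for k
      by (subst nn_integral_cmult) auto
    finally have "(\<integral>\<^sup>+\<omega>. ennreal (?c k) * indicator {..t} (T k \<omega>) \<partial>M) =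
        ennreal (?c k) * emeasure M {\<omega>\<in>space M. T k \<omega> \<le> t}" for k .
    then show ?thesis
      by (subst nn_integral_add) (auto simp: nn_integral_suminf emeasure_space_1)
  qed
  also have "\<dots> \<le> 1 + (\<Sum>k. ennreal (exp t * (?c k * gap_laplace ^ Suc k)))"
  proof (intro add_left_mono suminf_le summableI)
    fix k
    have "ennreal (?c k) * emeasure M {\<omega>\<in>space M. T k \<omega> \<le> t} \<le>
        ennreal (?c k) * ennreal (exp t * gap_laplace ^ Suc k)"
      using prob_T_le[of k t] by (intro mult_left_mono) (simp_all add: emeasure_eq_measure ennreal_leI)
    then show "ennreal (?c k) * emeasure M {\<omega>\<in>space M. T k \<omega> \<le> t} \<le>
        ennreal (exp t * (?c k * gap_laplace ^ Suc k))"
      using gap_laplace_nonneg by (simp add: ennreal_mult[symmetric] mult_ac)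
  qed
  also have "\<dots> = 1 + ennreal (\<Sum>k. exp t * (?c k * gap_laplace ^ Suc k))"
    using gap_laplace_nonneg
      summable_power_mult_geometric[OF gap_laplace_nonneg gap_laplace_less_1, of q]
    by (subst suminf_ennreal2) (auto intro!: summable_mult simp del: power_Suc)
  also have "\<dots> < \<infinity>" by (simp flip: ennreal_plus)
  finally show ?thesis .
qed

lemma nn_integral_claim_factor:
  "(\<integral>\<^sup>+\<omega>. (1 + arrival_count t (path \<omega>)) ^ q * indicator {..t} (T k \<omega>) *
      ennreal ((1 + \<bar>X k \<omega>\<bar>) ^ n) \<partial>M) =
    (\<integral>\<^sup>+\<omega>. (1 + arrival_count t (path \<omega>)) ^ q * indicator {..t} (T k \<omega>) \<partial>M) *
    (\<integral>\<^sup>+\<omega>. ennreal ((1 + \<bar>X 0 \<omega>\<bar>) ^ n) \<partial>M)"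
proof -
  have "indep_var borel
      (\<lambda>\<omega>. (\<lambda>y. (1 + arrival_count t y) ^ q * indicator {..t} (arr y (Suc k)))
        (path_mask (range Inl) (path \<omega>)))
      borel (\<lambda>\<omega>. (\<lambda>y. ennreal ((1 + \<bar>claim y k\<bar>) ^ n)) (path_mask {Inr (Inl k)} (path \<omega>)))"
    by (rule indep_path_masks_compose) auto
  then have "indep_var borel (\<lambda>\<omega>. (1 + arrival_count t (path \<omega>)) ^ q * indicator {..t} (T k \<omega>))
      borel (\<lambda>\<omega>. ennreal ((1 + \<bar>X k \<omega>\<bar>) ^ n))"
    by (simp add: arrival_count_path_mask_gaps arr_path_mask claim_path_mask arr_Suc_path)
  moreover have "(\<integral>\<^sup>+\<omega>. ennreal ((1 + \<bar>X k \<omega>\<bar>) ^ n) \<partial>M) =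
      (\<integral>\<^sup>+\<omega>. ennreal ((1 + \<bar>X 0 \<omega>\<bar>) ^ n) \<partial>M)"
    using X_ident by (intro nn_integral_eq_if_distr_eq[where g="\<lambda>x. ennreal ((1 + \<bar>x\<bar>) ^ n)"]) auto
  ultimately show ?thesis by (simp add: indep_var_nn_integral_mult)
qed

lemma nn_integral_arrival_count_claim_mass_finite:
  assumes "integrable M (\<lambda>\<omega>. \<bar>X 0 \<omega>\<bar> ^ n)"
  shows "(\<integral>\<^sup>+\<omega>. (1 + arrival_count t (path \<omega>)) ^ q * claim_mass n t (path \<omega>) \<partial>M) < \<infinity>"
proof -
  let ?N = "\<lambda>\<omega>. 1 + arrival_count t (path \<omega>)"
  define C where "C = (\<integral>\<^sup>+\<omega>. ennreal ((1 + \<bar>X 0 \<omega>\<bar>) ^ n) \<partial>M)"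
  have "(\<integral>\<^sup>+\<omega>. ?N \<omega> ^ q * claim_mass n t (path \<omega>) \<partial>M) =
      (\<Sum>k. \<integral>\<^sup>+\<omega>. ?N \<omega> ^ q * indicator {..t} (T k \<omega>) * ennreal ((1 + \<bar>X k \<omega>\<bar>) ^ n) \<partial>M)"
    unfolding claim_mass_def
    by (subst nn_integral_suminf[symmetric])
      (auto simp: ennreal_suminf_cmult[symmetric] arr_Suc_path mult_ac)
  also have "\<dots> = (\<Sum>k. \<integral>\<^sup>+\<omega>. ?N \<omega> ^ q * indicator {..t} (T k \<omega>) \<partial>M) * C"
    by (simp add: nn_integral_claim_factor C_def ennreal_suminf_multc)
  also have "(\<Sum>k. \<integral>\<^sup>+\<omega>. ?N \<omega> ^ q * indicator {..t} (T k \<omega>) \<partial>M) =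
      (\<integral>\<^sup>+\<omega>. ?N \<omega> ^ q * arrival_count t (path \<omega>) \<partial>M)"
    by (subst nn_integral_suminf[symmetric])
      (auto simp: ennreal_suminf_cmult arrival_count_def arr_Suc_path)
  also have "\<dots> \<le> (\<integral>\<^sup>+\<omega>. ?N \<omega> ^ Suc q \<partial>M)"
    by (intro nn_integral_mono) (simp add: mult.commute mult_right_mono)
  finally have "(\<integral>\<^sup>+\<omega>. ?N \<omega> ^ q * claim_mass n t (path \<omega>) \<partial>M) \<le>
      (\<integral>\<^sup>+\<omega>. ?N \<omega> ^ Suc q \<partial>M) * C"
    by (simp add: mult_right_mono)
  moreover have "(\<integral>\<^sup>+\<omega>. ?N \<omega> ^ Suc q \<partial>M) * C < \<infinity>"
    using nn_integral_power_arrival_count_finite[of t "Suc q"]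
      nn_integral_one_plus_abs_power_finite[OF assms]
    by (simp add: C_def ennreal_mult_less_top)
  ultimately show ?thesis by (rule le_less_trans)
qed

lemma integrable_dominant:
  assumes "integrable M (\<lambda>\<omega>. \<bar>X 0 \<omega>\<bar> ^ n)"
  shows "integrable M (\<lambda>\<omega>. dominant n t (path \<omega>))"
proof (rule integrableI_bounded)
  have "(\<integral>\<^sup>+\<omega>. ennreal (norm (dominant n t (path \<omega>))) \<partial>M) =
      (\<integral>\<^sup>+\<omega>. ennreal (2 ^ n) * ((1 + arrival_count t (path \<omega>)) ^ (n + 1) +
        (1 + arrival_count t (path \<omega>)) ^ (n + 1) * claim_mass n t (path \<omega>)) \<partial>M)"
    using AE_regular[of t]
    by (intro nn_integral_cong_AE)
      (auto elim!: eventually_mono simp: dominant_nonneg ennreal_dominant_eq)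
  also have "\<dots> = ennreal (2 ^ n) * ((\<integral>\<^sup>+\<omega>. (1 + arrival_count t (path \<omega>)) ^ (n + 1) \<partial>M) +
      (\<integral>\<^sup>+\<omega>. (1 + arrival_count t (path \<omega>)) ^ (n + 1) * claim_mass n t (path \<omega>) \<partial>M))"
    by (subst nn_integral_cmult)
      (auto simp del: power_Suc intro!: nn_integral_add arg_cong2[where f="(*)"])
  also have "\<dots> < \<infinity>"
    using nn_integral_power_arrival_count_finite[of t "n + 1"]
      nn_integral_arrival_count_claim_mass_finite[OF assms, of t "n + 1"]
    by (simp add: ennreal_mult_less_top)
  finally show "(\<integral>\<^sup>+\<omega>. ennreal (norm (dominant n t (path \<omega>))) \<partial>M) < \<infinity>" .
qed simp

definition moment :: "nat \<Rightarrow> real \<Rightarrow> real" where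
  "moment i s = (\<integral>\<omega>. ibnr_path \<delta> s (path \<omega>) ^ i \<partial>M)"

definition moment_bound :: "nat \<Rightarrow> real \<Rightarrow> real" where
  "moment_bound n t = (\<integral>\<omega>. dominant n t (path \<omega>) \<partial>M)"

lemma measurable_moment[measurable]: "moment i \<in> borel_measurable borel"
proof -
  have "(\<lambda>(s, \<omega>). ibnr_path \<delta> s (path \<omega>) ^ i) \<in> borel_measurable (borel \<Otimes>\<^sub>M M)"
    by (simp add: split_beta')
  then show ?thesis unfolding moment_def
    by (rule sigma_finite_measure.borel_measurable_lebesgue_integral[OF
          prob_space_imp_sigma_finite[OF prob_space_axioms]])
qed

lemma moment_bound_nonneg: "0 \<le> moment_bound n t"
  unfolding moment_bound_def using AE_regular[of t]
  by (intro integral_nonneg_AE) (auto elim!: eventually_mono simp: dominant_nonneg)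

lemma integrable_telescope_term:
  assumes "integrable M (\<lambda>\<omega>. \<bar>X 0 \<omega>\<bar> ^ n)" "i < n"
  shows "integrable M (\<lambda>\<omega>. telescope_term \<delta> n i t (path \<omega>) j)"
proof (rule Bochner_Integration.integrable_bound[OF integrable_dominant[OF assms(1), of t]])
  show "AE \<omega> in M. norm (telescope_term \<delta> n i t (path \<omega>) j) \<le> norm (dominant n t (path \<omega>))"
    using AE_regular[of t] by eventually_elim
      (simp add: abs_telescope_term_le_dominant[OF _ delta assms(2)] abs_of_nonneg[OF dominant_nonneg])
qed simp

lemma abs_moment_le:
  assumes "integrable M (\<lambda>\<omega>. \<bar>X 0 \<omega>\<bar> ^ n)" "s \<le> t" "i \<le> n"
  shows "\<bar>moment i s\<bar> \<le> moment_bound n t"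
proof -
  have bound: "AE \<omega> in M. \<bar>ibnr_path \<delta> s (path \<omega>) ^ i\<bar> \<le> dominant n t (path \<omega>)"
    using AE_regular[of t]
    by (auto elim!: eventually_mono intro: abs_power_ibnr_path_le_dominant[OF _ delta assms(2,3)])
  have "\<bar>moment i s\<bar> \<le> (\<integral>\<omega>. \<bar>ibnr_path \<delta> s (path \<omega>) ^ i\<bar> \<partial>M)"
    unfolding moment_def by (rule integral_abs_bound)
  also have "\<dots> \<le> moment_bound n t"
    unfolding moment_bound_def
  proof (rule integral_mono_AE[OF _ integrable_dominant[OF assms(1)] bound])
    show "integrable M (\<lambda>\<omega>. \<bar>ibnr_path \<delta> s (path \<omega>) ^ i\<bar>)"
    proof (rule Bochner_Integration.integrable_bound[OF integrable_dominant[OF assms(1), of t]])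
      show "AE \<omega> in M. norm \<bar>ibnr_path \<delta> s (path \<omega>) ^ i\<bar> \<le> norm (dominant n t (path \<omega>))"
        using bound AE_regular[of t] by eventually_elim (simp add: abs_of_nonneg[OF dominant_nonneg])
    qed simp
  qed
  finally show ?thesis .
qed

lemma w_nn_integral: "(\<integral>\<^sup>+x. ennreal (w x) \<partial>lborel) = 1"
proof -
  have "distr M lborel (L 0) = density lborel (\<lambda>x. ennreal (w x))"
    using L_dens[of 0] by (simp add: distributed_def)
  then have "emeasure (density lborel (\<lambda>x. ennreal (w x))) UNIV = 1"
    using emeasure_distr[of "L 0" M lborel UNIV] emeasure_space_1 by (simp add: measurable_lborel1)
  then show ?thesis by (simp add: emeasure_density measurable_lborel1)
qed

lemma integrable_w: "integrable lborel w"
  using w_nn_integral w_nonneg by (intro integrableI_bounded) (auto simp: measurable_lborel1)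

lemma integral_w: "(\<integral>x. w x \<partial>lborel) = 1"
  using w_nn_integral w_nonneg by (subst integral_eq_nn_integral) (auto simp: measurable_lborel1)

lemma integral_L:
  fixes g :: "real \<Rightarrow> real" assumes [measurable]: "g \<in> borel_measurable borel"
  shows "(\<integral>\<omega>. g (L j \<omega>) \<partial>M) = (\<integral>l. w l * g l \<partial>lborel)"
proof -
  have "(\<integral>\<omega>. g (L j \<omega>) \<partial>M) = integral\<^sup>L (density lborel (\<lambda>x. ennreal (w x))) g"
    using L_dens[of j] integral_distr[of "L j" M lborel g]
    by (simp add: distributed_def measurable_lborel1)
  also have "\<dots> = (\<integral>l. w l * g l \<partial>lborel)"
    using w_nonneg by (intro integral_real_density) (auto simp: measurable_lborel1)
  finally show ?thesis .
qed

lemma abs_DH_w_le: assumes "0 \<le> u" shows "\<bar>DH u w v\<bar> \<le> 1"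
proof -
  have le_w: "\<bar>indicator {v..} y *\<^sub>R (exp (- u * (y - v)) * w y)\<bar> \<le> w y" for y
  proof -
    have "exp (- u * (y - v)) \<le> 1" if "v \<le> y" using that assms by (simp add: mult_nonneg_nonneg)
    then show ?thesis
      using w_nonneg[of y] by (auto simp: indicator_def abs_mult intro: mult_left_le_one_le)
  qed
  have "\<bar>DH u w v\<bar> \<le> (\<integral>y. \<bar>indicator {v..} y *\<^sub>R (exp (- u * (y - v)) * w y)\<bar> \<partial>lborel)"
    unfolding DH_def set_lebesgue_integral_def by (rule integral_abs_bound)
  also have "\<dots> \<le> (\<integral>y. w y \<partial>lborel)"
  proof (rule integral_mono[OF _ integrable_w le_w])
    show "integrable lborel (\<lambda>y. \<bar>indicator {v..} y *\<^sub>R (exp (- u * (y - v)) * w y)\<bar>)"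
      using le_w w_nonneg
      by (intro Bochner_Integration.integrable_bound[OF integrable_w])
        (auto simp: measurable_lborel1 intro!: AE_I2)
  qed
  finally show ?thesis by (simp add: integral_w)
qed

lemma DH_w_eq_integral_delay:
  "exp (- real p * \<delta> * t) * DH (real p * \<delta>) w (t - x) =
    (\<integral>l. w l * exp (- \<delta> * (x + l)) ^ p * (if t < x + l then 1 else 0) \<partial>lborel)"
proof -
  have "exp (- real p * \<delta> * t) * DH (real p * \<delta>) w (t - x) =
      (\<integral>l. exp (- real p * \<delta> * t) *
        (indicator {t - x..} l * (exp (- (real p * \<delta>) * (l - (t - x))) * w l)) \<partial>lborel)"
    unfolding DH_def set_lebesgue_integral_def by simp
  also have "\<dots> = (\<integral>l. w l * exp (- \<delta> * (x + l)) ^ p * (if t < x + l then 1 else 0) \<partial>lborel)"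
  proof (rule integral_cong_AE)
    show "AE l in lborel. exp (- real p * \<delta> * t) *
        (indicator {t - x..} l * (exp (- (real p * \<delta>) * (l - (t - x))) * w l)) =
        w l * exp (- \<delta> * (x + l)) ^ p * (if t < x + l then 1 else 0)"
      using AE_lborel_singleton[of "t - x"]
    proof eventually_elim
      case (elim l)
      have "exp (- real p * \<delta> * t) * exp (- (real p * \<delta>) * (l - (t - x))) =
          exp (- \<delta> * (x + l)) ^ p"
        by (simp add: exp_add[symmetric] exp_of_nat_mult[symmetric] algebra_simps)
      then show ?case using elim by (auto simp: indicator_def mult_ac)
    qed
  qed (auto simp: measurable_lborel1)
  finally show ?thesis .
qed

lemma expectation_telescope_term:
  assumes Xn: "integrable M (\<lambda>\<omega>. \<bar>X 0 \<omega>\<bar> ^ n)" and i: "i < n"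
  shows "(\<integral>\<omega>. telescope_term \<delta> n i t (path \<omega>) j \<partial>M) =
    (\<integral>\<omega>. real (n choose i) * ibnr_term \<delta> t (path \<omega>) j ^ (n - i) *
      (exp (- \<delta> * T j \<omega>) ^ i * moment i (t - T j \<omega>)) \<partial>M)"
proof -
  define h where "h = (\<lambda>(u, v). real (n choose i) * ibnr_term \<delta> t u j ^ (n - i) *
      (exp (- \<delta> * arr u (Suc j)) * ibnr_path \<delta> (t - arr u (Suc j)) (shift_path (Suc j) v)) ^ i)"
  have [measurable]: "h \<in> borel_measurable (path_space \<Otimes>\<^sub>M path_space)"
    unfolding h_def ibnr_term_def by measurable
  let ?H = "\<lambda>\<omega>. path_mask (head_coords j) (path \<omega>)" and ?T = "\<lambda>\<omega>. path_mask (tail_coords j) (path \<omega>)"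
  have eq: "AE \<omega> in M. telescope_term \<delta> n i t (path \<omega>) j = h (?H \<omega>, ?T \<omega>)"
    using AE_regular[of t] by eventually_elim
      (simp add: h_def telescope_term_eq_shift_path ibnr_term_path_mask_head arr_path_mask_head
        shift_path_mask_tail)
  have int: "integrable M (\<lambda>\<omega>. h (?H \<omega>, ?T \<omega>))"
    by (rule integrable_cong_AE_imp[OF integrable_telescope_term[OF Xn i, of t j] _ eq]) measurable
  have "(\<integral>\<omega>. telescope_term \<delta> n i t (path \<omega>) j \<partial>M) = (\<integral>\<omega>. h (?H \<omega>, ?T \<omega>) \<partial>M)"
    using eq by (intro integral_cong_AE) auto
  also have "\<dots> = (\<integral>\<omega>. (\<integral>\<omega>'. h (?H \<omega>, ?T \<omega>') \<partial>M) \<partial>M)"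
    by (rule indep_var_integral_iterated[OF indep_path_masks[OF head_tail_coords_disjoint]])
      (simp_all add: int)
  also have "\<dots> = (\<integral>\<omega>. real (n choose i) * ibnr_term \<delta> t (path \<omega>) j ^ (n - i) *
      (exp (- \<delta> * T j \<omega>) ^ i * moment i (t - T j \<omega>)) \<partial>M)"
  proof (rule Bochner_Integration.integral_cong[OF refl])
    fix \<omega>
    let ?c = "real (n choose i) * ibnr_term \<delta> t (path \<omega>) j ^ (n - i) * exp (- \<delta> * T j \<omega>) ^ i"
    have "(\<integral>\<omega>'. h (?H \<omega>, ?T \<omega>') \<partial>M) =
        (\<integral>\<omega>'. ?c * ibnr_path \<delta> (t - T j \<omega>) (shift_path (Suc j) (path \<omega>')) ^ i \<partial>M)"
      by (simp add: h_def ibnr_term_path_mask_head arr_path_mask_head shift_path_mask_tail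
          arr_Suc_path power_mult_distrib mult_ac)
    also have "\<dots> = ?c * (\<integral>\<omega>'. ibnr_path \<delta> (t - T j \<omega>) (shift_path (Suc j) (path \<omega>')) ^ i \<partial>M)"
      by (rule integral_mult_right_zero)
    also have "(\<integral>\<omega>'. ibnr_path \<delta> (t - T j \<omega>) (shift_path (Suc j) (path \<omega>')) ^ i \<partial>M) =
        moment i (t - T j \<omega>)"
      unfolding moment_def
      by (rule integral_shift_path[where g="\<lambda>y. ibnr_path \<delta> (t - T j \<omega>) y ^ i"]) measurable
    finally show "(\<integral>\<omega>'. h (?H \<omega>, ?T \<omega>') \<partial>M) = real (n choose i) *
        ibnr_term \<delta> t (path \<omega>) j ^ (n - i) * (exp (- \<delta> * T j \<omega>) ^ i * moment i (t - T j \<omega>))"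
      by (simp add: mult_ac)
  qed
  finally show ?thesis .
qed

definition kernel :: "nat \<Rightarrow> nat \<Rightarrow> real \<Rightarrow> real \<Rightarrow> real \<Rightarrow> real" where
  "kernel n i t x l = indicator {0..t} x * (exp (- \<delta> * (x + l)) ^ (n - i) *
     (if t < x + l then 1 else 0) * (exp (- \<delta> * x) ^ i * moment i (t - x)))"

definition integrand :: "nat \<Rightarrow> nat \<Rightarrow> real \<Rightarrow> real \<Rightarrow> real" where
  "integrand n i t x = indicator {0..t} x * (exp (- real (n - i) * \<delta> * t) *
     (exp (- real i * \<delta> * x) * DH (real (n - i) * \<delta>) w (t - x) * moment i (t - x)))"

lemma measurable_kernel[measurable]:
  "(\<lambda>(x, l). kernel n i t x l) \<in> borel_measurable (borel \<Otimes>\<^sub>M borel)"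
  unfolding kernel_def by measurable

lemma measurable_DH_w[measurable]: "DH u w \<in> borel_measurable borel"
proof -
  have "(\<lambda>(v, y). indicator {v..} y *\<^sub>R (exp (- u * (y - v)) * w y)) =
      (\<lambda>(v::real, y::real). (if v \<le> y then 1 else 0) * (exp (- u * (y - v)) * w y))"
    by (auto simp: indicator_def fun_eq_iff)
  also have "\<dots> \<in> borel_measurable (borel \<Otimes>\<^sub>M lborel)" by measurable
  finally show ?thesis
    using lborel.borel_measurable_lebesgue_integral
    by (simp add: DH_def[abs_def] set_lebesgue_integral_def)
qed

lemma measurable_integrand[measurable]: "integrand n i t \<in> borel_measurable borel"
  unfolding integrand_def by measurable

lemma abs_kernel_le:
  assumes Xn: "integrable M (\<lambda>\<omega>. \<bar>X 0 \<omega>\<bar> ^ n)" and i: "i \<le> n"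
  shows "\<bar>kernel n i t x l\<bar> \<le> moment_bound n t"
proof (cases "x \<in> {0..t}")
  case True
  have a: "\<bar>exp (- \<delta> * (x + l)) ^ (n - i) * (if t < x + l then 1 else 0)\<bar> \<le> 1"
  proof (cases "t < x + l")
    case True
    then have "0 \<le> \<delta> * (x + l)" using \<open>x \<in> {0..t}\<close> delta by (intro mult_nonneg_nonneg) auto
    then show ?thesis using True by (simp add: power_le_one)
  qed simp
  have b: "\<bar>exp (- \<delta> * x) ^ i\<bar> \<le> 1"
    using True delta by (simp add: power_le_one mult_nonneg_nonneg)
  have c: "\<bar>moment i (t - x)\<bar> \<le> moment_bound n t"
    using True by (intro abs_moment_le[OF Xn _ i]) auto
  have "\<bar>kernel n i t x l\<bar> = \<bar>exp (- \<delta> * (x + l)) ^ (n - i) * (if t < x + l then 1 else 0)\<bar> *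
      (\<bar>exp (- \<delta> * x) ^ i\<bar> * \<bar>moment i (t - x)\<bar>)"
    using True by (simp add: kernel_def abs_mult)
  also have "\<dots> \<le> 1 * (1 * moment_bound n t)"
    using a b c by (intro mult_mono) auto
  finally show ?thesis by simp
qed (simp add: kernel_def moment_bound_nonneg)

lemma abs_integrand_le:
  assumes Xn: "integrable M (\<lambda>\<omega>. \<bar>X 0 \<omega>\<bar> ^ n)" and i: "i \<le> n"
  shows "\<bar>integrand n i t x\<bar> \<le> moment_bound n t"
proof (cases "x \<in> {0..t}")
  case True
  have "\<bar>exp (- real (n - i) * \<delta> * t)\<bar> \<le> 1" "\<bar>exp (- real i * \<delta> * x)\<bar> \<le> 1"
    using True delta by (simp_all add: mult_nonneg_nonneg)
  moreover have "\<bar>DH (real (n - i) * \<delta>) w (t - x)\<bar> \<le> 1"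
    using delta by (intro abs_DH_w_le) simp
  moreover have "\<bar>moment i (t - x)\<bar> \<le> moment_bound n t"
    using True by (intro abs_moment_le[OF Xn _ i]) auto
  ultimately have "\<bar>exp (- real (n - i) * \<delta> * t)\<bar> * (\<bar>exp (- real i * \<delta> * x)\<bar> *
      \<bar>DH (real (n - i) * \<delta>) w (t - x)\<bar> * \<bar>moment i (t - x)\<bar>) \<le> 1 * (1 * 1 * moment_bound n t)"
    by (intro mult_mono) auto
  then show ?thesis using True by (simp add: integrand_def abs_mult)
qed (simp add: integrand_def moment_bound_nonneg)

lemma integral_kernel_delay: "(\<integral>\<omega>. kernel n i t x (L j \<omega>) \<partial>M) = integrand n i t x"
proof -
  let ?c = "indicator {0..t} x * (exp (- \<delta> * x) ^ i * moment i (t - x))"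
  have "(\<integral>\<omega>. kernel n i t x (L j \<omega>) \<partial>M) = (\<integral>l. w l * kernel n i t x l \<partial>lborel)"
    by (rule integral_L) (simp add: kernel_def)
  also have "\<dots> = (\<integral>l. ?c * (w l * exp (- \<delta> * (x + l)) ^ (n - i) *
      (if t < x + l then 1 else 0)) \<partial>lborel)"
    by (intro Bochner_Integration.integral_cong) (auto simp: kernel_def mult_ac)
  also have "\<dots> = ?c * (\<integral>l. w l * exp (- \<delta> * (x + l)) ^ (n - i) *
      (if t < x + l then 1 else 0) \<partial>lborel)"
    by (rule integral_mult_right_zero)
  also have "\<dots> = ?c * (exp (- real (n - i) * \<delta> * t) * DH (real (n - i) * \<delta>) w (t - x))"
    by (simp only: DH_w_eq_integral_delay)
  finally show ?thesis
    by (simp add: integrand_def exp_of_nat_mult[symmetric] mult_ac)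
qed

lemma indep_claim_arrival_delay:
  fixes h :: "real \<times> real \<Rightarrow> real"
  assumes [measurable]: "h \<in> borel_measurable (borel \<Otimes>\<^sub>M borel)"
  shows "indep_var borel (\<lambda>\<omega>. X j \<omega> ^ p) borel (\<lambda>\<omega>. h (T j \<omega>, L j \<omega>))"
proof -
  have "indep_var borel (\<lambda>\<omega>. (\<lambda>y. claim y j ^ p) (path_mask {Inr (Inl j)} (path \<omega>)))
      borel (\<lambda>\<omega>. (\<lambda>y. h (arr y (Suc j), delay y j)) (path_mask (Inl ` {..j} \<union> {Inr (Inr j)}) (path \<omega>)))"
    by (rule indep_path_masks_compose) auto
  then show ?thesis
    by (simp add: claim_path_mask delay_path_mask arr_path_mask arr_Suc_path)
qed

lemma indep_arrival_delay: "indep_var borel (T j) borel (L j)"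
proof -
  have "indep_var borel (\<lambda>\<omega>. (\<lambda>y. arr y (Suc j)) (path_mask (Inl ` {..j}) (path \<omega>)))
      borel (\<lambda>\<omega>. (\<lambda>y. delay y j) (path_mask {Inr (Inr j)} (path \<omega>)))"
    by (rule indep_path_masks_compose) auto
  then show ?thesis by (simp add: delay_path_mask arr_path_mask arr_Suc_path eta_contract_eq)
qed

lemma expectation_kernel:
  assumes Xn: "integrable M (\<lambda>\<omega>. \<bar>X 0 \<omega>\<bar> ^ n)" and i: "i \<le> n"
  shows "(\<integral>\<omega>. kernel n i t (T j \<omega>) (L j \<omega>) \<partial>M) = (\<integral>\<omega>. integrand n i t (T j \<omega>) \<partial>M)"
proof -
  have "(\<integral>\<omega>. (\<lambda>(x, l). kernel n i t x l) (T j \<omega>, L j \<omega>) \<partial>M) =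
      (\<integral>\<omega>. (\<integral>\<omega>'. (\<lambda>(x, l). kernel n i t x l) (T j \<omega>, L j \<omega>') \<partial>M) \<partial>M)"
    using abs_kernel_le[OF Xn i]
    by (intro indep_var_integral_iterated[OF indep_arrival_delay] integrable_const_bound) auto
  then show ?thesis by (simp add: integral_kernel_delay)
qed

lemma telescope_summand_eq_kernel:
  assumes "\<omega> \<in> space M" "i < n"
  shows "ibnr_term \<delta> t (path \<omega>) j ^ (n - i) * (exp (- \<delta> * T j \<omega>) ^ i * moment i (t - T j \<omega>)) =
    X j \<omega> ^ (n - i) * kernel n i t (T j \<omega>) (L j \<omega>)"
proof (cases "T j \<omega> \<le> t \<and> t < T j \<omega> + L j \<omega>")
  case True
  then show ?thesis using T_pos[OF assms(1), of j]
    by (simp add: ibnr_term_def kernel_def arr_Suc_path power_mult_distrib mult_ac)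
next
  case False
  then have "ibnr_term \<delta> t (path \<omega>) j = 0" "kernel n i t (T j \<omega>) (L j \<omega>) = 0"
    by (auto simp: ibnr_term_def arr_Suc_path kernel_def)
  then show ?thesis using assms(2) by simp
qed

lemma expectation_telescope_summand:
  assumes Xn: "integrable M (\<lambda>\<omega>. \<bar>X 0 \<omega>\<bar> ^ n)" and i: "i < n"
  shows "(\<integral>\<omega>. real (n choose i) * ibnr_term \<delta> t (path \<omega>) j ^ (n - i) *
      (exp (- \<delta> * T j \<omega>) ^ i * moment i (t - T j \<omega>)) \<partial>M)
    = real (n choose i) * (\<integral>\<omega>. X 0 \<omega> ^ (n - i) \<partial>M) * (\<integral>\<omega>. integrand n i t (T j \<omega>) \<partial>M)"
proof -
  have int_X: "integrable M (\<lambda>\<omega>. X j \<omega> ^ (n - i))"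
  proof (subst integrable_iff_distr_eq[OF X_ident, where g="\<lambda>x. x ^ (n - i)"])
    show "integrable M (\<lambda>\<omega>. X 0 \<omega> ^ (n - i))"
    proof (rule Bochner_Integration.integrable_bound)
      show "integrable M (\<lambda>\<omega>. 1 + \<bar>X 0 \<omega>\<bar> ^ n)" using Xn by auto
      show "AE \<omega> in M. norm (X 0 \<omega> ^ (n - i)) \<le> norm (1 + \<bar>X 0 \<omega>\<bar> ^ n)"
        using abs_power_le_one_plus_abs_power[of "n - i" n] by (auto simp: power_abs)
    qed simp
  qed simp_all
  have int_K: "integrable M (\<lambda>\<omega>. kernel n i t (T j \<omega>) (L j \<omega>))"
    using abs_kernel_le[OF Xn] i by (intro integrable_const_bound[where B="moment_bound n t"]) auto
  have "(\<integral>\<omega>. real (n choose i) * ibnr_term \<delta> t (path \<omega>) j ^ (n - i) *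
      (exp (- \<delta> * T j \<omega>) ^ i * moment i (t - T j \<omega>)) \<partial>M) =
      real (n choose i) * (\<integral>\<omega>. X j \<omega> ^ (n - i) * kernel n i t (T j \<omega>) (L j \<omega>) \<partial>M)"
    using telescope_summand_eq_kernel[OF _ i]
    by (subst integral_mult_right_zero[symmetric]) (auto intro!: Bochner_Integration.integral_cong
        simp: mult.assoc)
  also have "(\<integral>\<omega>. X j \<omega> ^ (n - i) * kernel n i t (T j \<omega>) (L j \<omega>) \<partial>M) =
      (\<integral>\<omega>. X j \<omega> ^ (n - i) \<partial>M) * (\<integral>\<omega>. kernel n i t (T j \<omega>) (L j \<omega>) \<partial>M)"
    using int_X int_K
    by (intro indep_var_lebesgue_integral indep_claim_arrival_delay[where h="\<lambda>(x, l). kernel n i t x l", simplified])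
      auto
  also have "(\<integral>\<omega>. X j \<omega> ^ (n - i) \<partial>M) = (\<integral>\<omega>. X 0 \<omega> ^ (n - i) \<partial>M)"
    using X_ident by (intro integral_eq_if_distr_eq[where g="\<lambda>x. x ^ (n - i)"]) auto
  finally show ?thesis using expectation_kernel[OF Xn, of i] i by (simp add: mult_ac)
qed

lemma expectation_telescope_term_sums:
  assumes Xn: "integrable M (\<lambda>\<omega>. \<bar>X 0 \<omega>\<bar> ^ n)" and i: "i < n"
  shows "(\<lambda>j. \<integral>\<omega>. telescope_term \<delta> n i t (path \<omega>) j \<partial>M) sums
    (real (n choose i) * (\<integral>\<omega>. X 0 \<omega> ^ (n - i) \<partial>M) *
      (\<integral>x. integrand n i t x \<partial>interval_measure (renewal_fun M \<tau>)))"
proof -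
  have "(\<lambda>j. \<integral>\<omega>. integrand n i t (T j \<omega>) \<partial>M) sums
      (\<integral>x. integrand n i t x \<partial>interval_measure (renewal_fun M \<tau>))"
    using abs_integrand_le[OF Xn] i
    by (intro renewal_fun_sums[where c="moment_bound n t" and t=t]) (auto simp: integrand_def)
  from sums_mult[OF this, of "real (n choose i) * (\<integral>\<omega>. X 0 \<omega> ^ (n - i) \<partial>M)"] show ?thesis
    by (simp only: expectation_telescope_term[OF Xn i] expectation_telescope_summand[OF Xn i])
qed

lemma expectation_telescope_sums:
  assumes Xn: "integrable M (\<lambda>\<omega>. \<bar>X 0 \<omega>\<bar> ^ n)" and n: "1 \<le> n"
  shows "(\<lambda>j. \<integral>\<omega>. (\<Sum>i<n. telescope_term \<delta> n i t (path \<omega>) j) \<partial>M) sums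
    (\<integral>\<omega>. ibnr_path \<delta> t (path \<omega>) ^ n \<partial>M)"
proof -
  let ?F = "\<lambda>j \<omega>. \<Sum>i<n. telescope_term \<delta> n i t (path \<omega>) j"
  have "(\<lambda>N. \<integral>\<omega>. (\<Sum>j<N. ?F j \<omega>) \<partial>M) \<longlonglongrightarrow> (\<integral>\<omega>. ibnr_path \<delta> t (path \<omega>) ^ n \<partial>M)"
  proof (rule integral_dominated_convergence[where w="\<lambda>\<omega>. dominant n t (path \<omega>)"])
    show "integrable M (\<lambda>\<omega>. dominant n t (path \<omega>))" by (rule integrable_dominant[OF Xn])
    show "AE \<omega> in M. (\<lambda>N. \<Sum>j<N. ?F j \<omega>) \<longlonglongrightarrow> ibnr_path \<delta> t (path \<omega>) ^ n"
      using AE_regular[of t]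
      by eventually_elim (use telescope_term_sums[OF _ n] in \<open>auto simp: sums_def\<close>)
    show "AE \<omega> in M. norm (\<Sum>j<N. ?F j \<omega>) \<le> dominant n t (path \<omega>)" for N
      using AE_regular[of t]
      by eventually_elim (use abs_telescope_partial_sum_le_dominant[OF _ delta] in auto)
  qed simp_all
  moreover have "(\<integral>\<omega>. (\<Sum>j<N. ?F j \<omega>) \<partial>M) = (\<Sum>j<N. \<integral>\<omega>. ?F j \<omega> \<partial>M)" for N
    by (rule Bochner_Integration.integral_sum) (auto intro: integrable_telescope_term[OF Xn])
  ultimately show ?thesis by (simp add: sums_def)
qed

lemma moment_recursion:
  assumes Xn: "integrable M (\<lambda>\<omega>. \<bar>X 0 \<omega>\<bar> ^ n)" and n: "1 \<le> n"
  shows "moment n t = (\<Sum>i<n. real (n choose i) * (\<integral>\<omega>. X 0 \<omega> ^ (n - i) \<partial>M) *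
    (\<integral>x. integrand n i t x \<partial>interval_measure (renewal_fun M \<tau>)))"
proof -
  have "(\<lambda>j. \<Sum>i<n. \<integral>\<omega>. telescope_term \<delta> n i t (path \<omega>) j \<partial>M) sums
      (\<Sum>i<n. real (n choose i) * (\<integral>\<omega>. X 0 \<omega> ^ (n - i) \<partial>M) *
        (\<integral>x. integrand n i t x \<partial>interval_measure (renewal_fun M \<tau>)))"
    by (intro sums_sum expectation_telescope_term_sums[OF Xn]) simp
  moreover have "(\<integral>\<omega>. (\<Sum>i<n. telescope_term \<delta> n i t (path \<omega>) j) \<partial>M) =
      (\<Sum>i<n. \<integral>\<omega>. telescope_term \<delta> n i t (path \<omega>) j \<partial>M)" for j
    by (rule Bochner_Integration.integral_sum) (auto intro: integrable_telescope_term[OF Xn])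
  ultimately show ?thesis
    using sums_unique2[OF expectation_telescope_sums[OF Xn n]] by (simp add: moment_def)
qed

end

theorem theorem1:
  fixes M :: "'a measure"
    and \<tau> X L :: "nat \<Rightarrow> 'a \<Rightarrow> real"
    and f w :: "real \<Rightarrow> real"
    and \<delta> t :: real and n :: nat
  assumes "prob_space M"
    and indep: "prob_space.indep_vars M (\<lambda>_. borel) (case_sum \<tau> (case_sum X L)) UNIV"
    and tau_pos: "\<And>i \<omega>. \<omega> \<in> space M \<Longrightarrow> \<tau> i \<omega> > 0"
    and f_nonneg: "\<And>x. f x \<ge> 0" and f_meas: "f \<in> borel_measurable borel"
    and tau_dens: "\<And>i. distributed M lborel (\<tau> i) (\<lambda>x. ennreal (f x))"
    and X_ident: "\<And>i. distr M borel (X i) = distr M borel (X 0)"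
    and X_mom: "integrable M (\<lambda>\<omega>. \<bar>X 0 \<omega>\<bar> ^ n)"
    and w_nonneg: "\<And>x. w x \<ge> 0" and w_meas: "w \<in> borel_measurable borel"
    and L_dens: "\<And>i. distributed M lborel (L i) (\<lambda>x. ennreal (w x))"
    and delta: "\<delta> \<ge> 0"
    and t_pos: "t > 0"
    and n_pos: "n \<ge> 1"
  shows "(\<integral>\<omega>. (Zdisc \<delta> \<tau> X L t \<omega>) ^ n \<partial>M) =
    (\<Sum>i<n. (\<integral>\<omega>. (X 0 \<omega>) ^ (n - i) \<partial>M) * real (n choose i)
        * exp (- real (n - i) * \<delta> * t)
        * (\<integral>x\<in>{0..t}. exp (- real i * \<delta> * x) * DH (real (n - i) * \<delta>) w (t - x)
              * (\<integral>\<omega>. (Zdisc \<delta> \<tau> X L (t - x) \<omega>) ^ i \<partial>M)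
           \<partial>(interval_measure (renewal_fun M \<tau>))))"
proof -
  have "distr M borel (\<tau> i) = distr M borel (\<tau> 0)" for i
    using tau_dens[of i] tau_dens[of 0] by (simp add: distributed_def distr_borel_eq_distr_lborel)
  then interpret ibnr_model M \<tau> X L w \<delta>
    using assms by (simp add: ibnr_model_def ibnr_model_axioms_def)
  have integrand: "(\<integral>x. integrand n i t x \<partial>interval_measure (renewal_fun M \<tau>)) =
      exp (- real (n - i) * \<delta> * t) * (\<integral>x\<in>{0..t}. exp (- real i * \<delta> * x) *
        DH (real (n - i) * \<delta>) w (t - x) * moment i (t - x) \<partial>interval_measure (renewal_fun M \<tau>))"
    for i
    unfolding integrand_def set_lebesgue_integral_def
    by (simp add: integral_mult_right_zero[symmetric] mult_ac del: integral_mult_right_zero)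
  show ?thesis
    unfolding Zdisc_eq_ibnr_path moment_recursion[OF X_mom n_pos, unfolded moment_def] integrand
    by (intro sum.cong refl) (simp add: mult_ac moment_def)
qed

end
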